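(* Under the asymptotic scaling assumption, let $\widehat{V}$ be a (data-dependent) variance estimator such that for every $\epsilon>0$, $\lim_{n\to\infty}\Pr\big(n\,\mathrm{var}(\overline{X}) - n\widehat{V}>\epsilon\big)=0$. Then for $\alpha\in(0,1)$ and $z_{1-\alpha/2}$ the $(1-\alpha/2)$-quantile of the standard normal distribution, the confidence intervals $\overline{X}\pm z_{1-\alpha/2}\sqrt{\widehat{V}}$ have asymptotic coverage for $\mu$ of at least $100(1-\alpha)\%$, i.e. $\liminf_{n\to\infty}\Pr\big(|\overline{X}-\mu|\le z_{1-\alpha/2}\sqrt{\widehat{V}}\big)\ge 1-\alpha$.
   Context: Setting: $\mathcal{G}=(\mathcal{V},\mathcal{E})$ is a simple undirected graph with a real random variable $X_i$ attached to each vertex $i$. $\mathcal{G}$ is a dependency graph: for all disjoint $\mathcal{V}_1,\mathcal{V}_2\subset\mathcal{V}$ such that no edge of $\mathcal{E}$ joins a vertex of $\mathcal{V}_1$ to a vertex of $\mathcal{V}_2$, $\{X_i:i\in\mathcal{V}_1\}$ is independent of $\{X_j:j\in\mathcal{V}_2\}$. A subset $\mathcal{V}_S\subseteq\mathcal{V}$ with $|\mathcal{V}_S|=n$ is observed, labeled $1,\dots,n$. $\mathcal{G}_S=(\mathcal{V}_S,\mathcal{E}_S)$ is the induced subgraph on $\mathcal{V}_S$, with $n\times n$ adjacency matrix $\mathbf{A}^\circ$. Let $\mu=\frac1n\sum_{i=1}^n \mathrm{E}[X_i]$ and $\overline{X}=\frac1n\sum_i X_i$. Asymptotic scaling assumption: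 a sequence, indexed by $n\to\infty$, of such settings (nested graphs with $|\mathcal{V}|=N_n\ge n$, $|\mathcal{V}_S|=n$), with finite positive constants $c_1,c_2,c_3$ independent of $n$ such that: $\Pr(|X_i-\mu|>c_1)=0$ for all $i\in\mathcal{V}_S$; $\sum_{j}\mathbf{A}^\circ_{ij}\le c_2$ for all $i\in\mathcal{V}_S$; and $\lim_{n\to\infty} n\,\mathrm{var}(\overline{X})=c_3$. *)

theory Defs
  imports "HOL-Probability.Probability"
begin

definition simple_graph :: "'v set \<Rightarrow> ('v \<Rightarrow> 'v \<Rightarrow> bool) \<Rightarrow> bool" where
  "simple_graph V E \<longleftrightarrow> (\<forall>i j. E i j \<longrightarrow> i \<in> V \<and> j \<in> V) \<and>
     (\<forall>i j. E i j \<longrightarrow> E j i) \<and> (\<forall>i. \<not> E i i)"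

definition dependency_graph ::
  "'a measure \<Rightarrow> 'v set \<Rightarrow> ('v \<Rightarrow> 'v \<Rightarrow> bool) \<Rightarrow> ('v \<Rightarrow> 'a \<Rightarrow> real) \<Rightarrow> bool" where
  "dependency_graph M V E X \<longleftrightarrow>
     simple_graph V E \<and> (\<forall>i\<in>V. X i \<in> borel_measurable M) \<and>
     (\<forall>V1 V2. V1 \<subseteq> V \<longrightarrow> V2 \<subseteq> V \<longrightarrow> V1 \<inter> V2 = {} \<longrightarrow>
        (\<forall>i\<in>V1. \<forall>j\<in>V2. \<not> E i j) \<longrightarrow>
        prob_space.indep_var M
          (PiM V1 (\<lambda>_. borel)) (\<lambda>\<omega>. \<lambda>i\<in>V1. X i \<omega>)
          (PiM V2 (\<lambda>_. borel)) (\<lambda>\<omega>. \<lambda>j\<in>V2. X j \<omega>))"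

definition std_normal :: "real measure" where
  "std_normal = density lborel std_normal_density"

definition std_normal_cdf :: "real \<Rightarrow> real" where
  "std_normal_cdf x = cdf std_normal x"

definition std_normal_quantile :: "real \<Rightarrow> real" where
  "std_normal_quantile p = (THE z. std_normal_cdf z = p)"

end

theory Submission
  imports Defs
begin

text \<open>Clipping each \<open>X\<^sub>i\<close> at \<open>\<mu> \<plusminus> c\<^sub>1\<close> (a change on a null set only) and standardizing gives
  bounded centred summands \<open>Y\<^sub>i\<close> with \<open>Var (\<Sum> Y\<^sub>i) = 1\<close> that still form a dependency graph of
  bounded degree. For such locally dependent sums, Stein's method applied to the characteristic
  function \<open>\<phi>\<close> of \<open>W = \<Sum> Y\<^sub>i\<close> shows that \<open>\<phi>'(t) + t \<phi>(t)\<close> is of order \<open>n b\<^sup>3 t\<^sup>2\<close>, where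
  \<open>b\<close> bounds the \<open>Y\<^sub>i\<close>; comparison with the Gaussian equation \<open>\<phi>' = - t \<phi>\<close> then gives
  \<open>|\<phi>(t) - exp (- t\<^sup>2 / 2)| = O (n b\<^sup>3 |t|\<^sup>3)\<close>, and \<open>n b\<^sup>3 \<rightarrow> 0\<close> because
  \<open>b \<sim> 1 / \<surd>n\<close>. Levy's continuity theorem yields a central limit theorem for the standardized
  mean. Finally, outside the event \<open>Vhat n < r\<^sup>2 Var (Xbar n)\<close>, whose probability vanishes by the
  consistency assumption, the interval covers \<open>\<mu>\<close> as soon as the standardized mean lies in
  \<open>[- z r, z r]\<close>; so the coverage is asymptotically at least \<open>\<Phi> (z r) - \<Phi> (- z r)\<close> for every
  \<open>r < 1\<close>, hence at least \<open>1 - \<alpha>\<close>.\<close>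

section \<open>Characteristic functions of bounded random variables\<close>

lemma cmod_iexp_sub_one_le: "cmod (iexp x - 1) \<le> \<bar>x\<bar>"
  using iexp_approx1[of x 0] by simp

lemma cmod_iexp_sub_linear_le: "cmod (iexp x - 1 - \<i> * x) \<le> x\<^sup>2 / 2"
  using iexp_approx1[of x 1] by (simp add: power2_eq_square diff_diff_eq)

lemma (in finite_measure) integrable_of_norm_le_const:
  fixes f :: "'a \<Rightarrow> 'b::{banach, second_countable_topology}"
  shows "f \<in> borel_measurable M \<Longrightarrow> (\<And>\<omega>. norm (f \<omega>) \<le> C) \<Longrightarrow> integrable M f"
  by (rule integrable_const_bound[where B=C]) auto

lemma (in prob_space) norm_integral_le_const:
  fixes f :: "'a \<Rightarrow> 'b::{banach, second_countable_topology}"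
  assumes "f \<in> borel_measurable M" "\<And>\<omega>. norm (f \<omega>) \<le> C"
  shows "norm (integral\<^sup>L M f) \<le> C"
proof -
  have "norm (integral\<^sup>L M f) \<le> integral\<^sup>L M (\<lambda>\<omega>. norm (f \<omega>))"
    by (rule integral_norm_bound)
  also have "\<dots> \<le> integral\<^sup>L M (\<lambda>\<omega>. C)"
    using assms order_trans[OF norm_ge_zero assms(2)]
    by (intro integral_mono integrable_of_norm_le_const[where C=C]) auto
  also have "\<dots> = C"
    by (simp add: prob_space)
  finally show ?thesis .
qed

lemma (in prob_space) cmod_char_integral_diff_le:
  fixes X Z :: "'a \<Rightarrow> real"
  assumes [measurable]: "X \<in> borel_measurable M" "Z \<in> borel_measurable M"
    and close: "\<And>\<omega>. \<bar>X \<omega> - Z \<omega>\<bar> \<le> C"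
  shows "cmod ((CLINT \<omega>|M. iexp (t * X \<omega>)) - (CLINT \<omega>|M. iexp (t * Z \<omega>))) \<le> \<bar>t\<bar> * C"
proof -
  have "(CLINT \<omega>|M. iexp (t * X \<omega>)) - (CLINT \<omega>|M. iexp (t * Z \<omega>))
      = (CLINT \<omega>|M. iexp (t * X \<omega>) - iexp (t * Z \<omega>))"
    by (subst Bochner_Integration.integral_diff)
      (auto intro!: integrable_of_norm_le_const[where C=1])
  also have "cmod \<dots> \<le> \<bar>t\<bar> * C"
  proof (rule norm_integral_le_const)
    fix \<omega>
    have "iexp (t * X \<omega>) - iexp (t * Z \<omega>) = iexp (t * Z \<omega>) * (iexp (t * (X \<omega> - Z \<omega>)) - 1)"
      by (simp add: exp_add[symmetric] algebra_simps)
    then have "cmod (iexp (t * X \<omega>) - iexp (t * Z \<omega>)) = cmod (iexp (t * (X \<omega> - Z \<omega>)) - 1)"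
      by (simp add: norm_mult)
    also have "\<dots> \<le> \<bar>t\<bar> * \<bar>X \<omega> - Z \<omega>\<bar>"
      using cmod_iexp_sub_one_le[of "t * (X \<omega> - Z \<omega>)"] by (simp add: abs_mult)
    also have "\<dots> \<le> \<bar>t\<bar> * C"
      by (intro mult_left_mono close) auto
    finally show "cmod (iexp (t * X \<omega>) - iexp (t * Z \<omega>)) \<le> \<bar>t\<bar> * C" .
  qed measurable
  finally show ?thesis .
qed

lemma has_vector_derivative_of_quadratic_remainder:
  fixes f :: "real \<Rightarrow> 'b::real_normed_vector"
  assumes remainder: "\<And>s. norm (f s - f t - (s - t) *\<^sub>R f') \<le> C * (s - t)\<^sup>2"
  shows "(f has_vector_derivative f') (at t)"
  unfolding has_vector_derivative_def has_derivative_at_alt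
proof (intro conjI allI impI bounded_linear_scaleR_left)
  fix e :: real assume "e > 0"
  define d where "d = e / (\<bar>C\<bar> + 1)"
  have "d > 0"
    using \<open>e > 0\<close> by (simp add: d_def add_nonneg_pos)
  moreover have "norm (f s - f t - (s - t) *\<^sub>R f') \<le> e * norm (s - t)" if "norm (s - t) < d" for s
  proof -
    have "\<bar>C\<bar> * \<bar>s - t\<bar> \<le> (\<bar>C\<bar> + 1) * d"
      using that by (intro mult_mono) auto
    also have "\<dots> = e"
      by (simp add: d_def add_nonneg_pos)
    finally have "\<bar>C\<bar> * \<bar>s - t\<bar> * \<bar>s - t\<bar> \<le> e * \<bar>s - t\<bar>"
      by (intro mult_right_mono) auto
    moreover have "C * (s - t)\<^sup>2 \<le> \<bar>C\<bar> * \<bar>s - t\<bar> * \<bar>s - t\<bar>"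
      using mult_right_mono[OF abs_ge_self[of C] zero_le_power2[of "s - t"]]
      by (simp add: power2_eq_square mult.assoc)
    ultimately show ?thesis
      using remainder[of s] by simp
  qed
  ultimately show "\<exists>d>0. \<forall>s. norm (s - t) < d \<longrightarrow> norm (f s - f t - (s - t) *\<^sub>R f') \<le> e * norm (s - t)"
    by blast
qed

lemma (in prob_space) cmod_char_integral_taylor_le:
  fixes W :: "'a \<Rightarrow> real"
  assumes [measurable]: "W \<in> borel_measurable M" and bounded: "\<And>\<omega>. \<bar>W \<omega>\<bar> \<le> B"
  shows "cmod ((CLINT \<omega>|M. iexp (s * W \<omega>)) - (CLINT \<omega>|M. iexp (t * W \<omega>))
      - (s - t) *\<^sub>R (CLINT \<omega>|M. \<i> * W \<omega> * iexp (t * W \<omega>))) \<le> B\<^sup>2 / 2 * (s - t)\<^sup>2"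
proof -
  have "(CLINT \<omega>|M. iexp (s * W \<omega>)) - (CLINT \<omega>|M. iexp (t * W \<omega>))
        - (s - t) *\<^sub>R (CLINT \<omega>|M. \<i> * W \<omega> * iexp (t * W \<omega>))
      = (CLINT \<omega>|M. iexp (s * W \<omega>) - iexp (t * W \<omega>) - (s - t) *\<^sub>R (\<i> * W \<omega> * iexp (t * W \<omega>)))"
    by (simp add: integral_diff integrable_of_norm_le_const[where C=1]
        integrable_of_norm_le_const[where C=B] norm_mult bounded)
  also have "\<dots> = (CLINT \<omega>|M. iexp (t * W \<omega>) * (iexp ((s - t) * W \<omega>) - 1 - \<i> * ((s - t) * W \<omega>)))"
    by (intro Bochner_Integration.integral_cong refl)
      (simp add: exp_add[symmetric] algebra_simps scaleR_conv_of_real)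
  also have "cmod \<dots> \<le> B\<^sup>2 / 2 * (s - t)\<^sup>2"
  proof (rule norm_integral_le_const)
    fix \<omega>
    have "(W \<omega>)\<^sup>2 \<le> B\<^sup>2"
      using power_mono[OF bounded[of \<omega>] abs_ge_zero, of 2] by simp
    then have "((s - t) * W \<omega>)\<^sup>2 / 2 \<le> B\<^sup>2 / 2 * (s - t)\<^sup>2"
      by (simp add: power_mult_distrib mult.commute mult_right_mono)
    with cmod_iexp_sub_linear_le[of "(s - t) * W \<omega>"]
    show "cmod (iexp (t * W \<omega>) * (iexp ((s - t) * W \<omega>) - 1 - \<i> * ((s - t) * W \<omega>)))
        \<le> B\<^sup>2 / 2 * (s - t)\<^sup>2"
      by (simp add: norm_mult del: of_real_mult)
  qed measurable
  finally show ?thesis .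
qed

lemma (in prob_space) has_vector_derivative_char_integral:
  fixes W :: "'a \<Rightarrow> real"
  assumes "W \<in> borel_measurable M" "\<And>\<omega>. \<bar>W \<omega>\<bar> \<le> B"
  shows "((\<lambda>s. CLINT \<omega>|M. iexp (s * W \<omega>)) has_vector_derivative
      (CLINT \<omega>|M. \<i> * W \<omega> * iexp (t * W \<omega>))) (at t)"
  using cmod_char_integral_taylor_le[OF assms] by (rule has_vector_derivative_of_quadratic_remainder)

lemma norm_diff_le_of_vector_derivative_bound:
  fixes f f' :: "real \<Rightarrow> 'b::real_normed_vector"
  assumes deriv: "\<And>s. (f has_vector_derivative f' s) (at s)"
    and bound: "\<And>s. a \<le> s \<Longrightarrow> s \<le> b \<Longrightarrow> norm (f' s) \<le> B" and "a \<le> b"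
  shows "norm (f b - f a) \<le> B * (b - a)"
proof (cases "a = b")
  case False
  then have "a < b"
    using \<open>a \<le> b\<close> by simp
  have "continuous_on {a..b} f"
    using deriv by (meson continuous_at_imp_continuous_on has_vector_derivative_continuous)
  then have "norm (f b - f a) \<le> B * b - B * a"
    by (rule differentiable_bound_general[OF \<open>a < b\<close> _ _ deriv, where \<phi>="\<lambda>x. B * x" and \<phi>'="\<lambda>_. B"])
      (auto intro!: continuous_on_mult_left continuous_on_id derivative_eq_intros bound
        simp: has_real_derivative_iff_has_vector_derivative[symmetric])
  then show ?thesis
    by (simp add: algebra_simps)
qed simp

text \<open>The integrating factor \<open>exp (s\<^sup>2 / 2)\<close> turns the defect \<open>\<phi>' + s \<phi>\<close> into the derivative
  of \<open>exp (s\<^sup>2 / 2) \<phi> s\<close>.\<close>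
lemma gaussian_ode_comparison:
  fixes \<phi> \<phi>' :: "real \<Rightarrow> complex"
  assumes deriv: "\<And>s. (\<phi> has_vector_derivative \<phi>' s) (at s)" and \<phi>0: "\<phi> 0 = 1"
    and defect: "\<And>s. cmod (\<phi>' s + s * \<phi> s) \<le> \<delta> * s\<^sup>2"
  shows "cmod (\<phi> t - of_real (exp (- t\<^sup>2 / 2))) \<le> \<delta> * \<bar>t\<bar> ^ 3"
proof -
  have "0 \<le> \<delta> * 1\<^sup>2"
    using defect[of 1] norm_ge_zero[of "\<phi>' 1 + complex_of_real 1 * \<phi> 1"] by linarith
  then have "\<delta> \<ge> 0"
    by simp
  define \<psi> where "\<psi> s = exp (s\<^sup>2 / 2) *\<^sub>R \<phi> s" for s
  define \<psi>' where "\<psi>' s = exp (s\<^sup>2 / 2) *\<^sub>R (\<phi>' s + s * \<phi> s)" for s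
  have deriv_\<psi>: "(\<psi> has_vector_derivative \<psi>' s) (at s)" for s
  proof -
    have "((\<lambda>s. exp (s\<^sup>2 / 2)) has_field_derivative (exp (s\<^sup>2 / 2) * s)) (at s)"
      by (auto intro!: derivative_eq_intros)
    from has_vector_derivative_scaleR[OF this deriv] show ?thesis
      unfolding \<psi>_def \<psi>'_def by (simp add: algebra_simps scaleR_conv_of_real)
  qed
  define B where "B = exp (t\<^sup>2 / 2) * (\<delta> * t\<^sup>2)"
  have bound: "norm (\<psi>' s) \<le> B" if "\<bar>s\<bar> \<le> \<bar>t\<bar>" for s
  proof -
    have "s\<^sup>2 \<le> t\<^sup>2"
      using that by (simp add: abs_le_square_iff)
    then show ?thesis
      unfolding \<psi>'_def B_def using defect[of s] \<open>\<delta> \<ge> 0\<close>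
      by (auto intro!: mult_mono order_trans[OF _ mult_left_mono[of "s\<^sup>2" "t\<^sup>2" \<delta>]])
  qed
  have "norm (\<psi> t - \<psi> 0) \<le> B * \<bar>t\<bar>"
  proof (cases "t \<ge> 0")
    case True
    then show ?thesis
      using norm_diff_le_of_vector_derivative_bound[OF deriv_\<psi>, of 0 t B] bound by auto
  next
    case False
    then show ?thesis
      using norm_diff_le_of_vector_derivative_bound[OF deriv_\<psi>, of t 0 B] bound
      by (auto simp: norm_minus_commute)
  qed
  moreover have "\<phi> t - of_real (exp (- t\<^sup>2 / 2)) = exp (- t\<^sup>2 / 2) *\<^sub>R (\<psi> t - \<psi> 0)"
    using \<phi>0 unfolding \<psi>_def
    by (simp add: algebra_simps scaleR_conv_of_real flip: of_real_mult exp_add)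
  ultimately have "cmod (\<phi> t - of_real (exp (- t\<^sup>2 / 2))) \<le> exp (- t\<^sup>2 / 2) * (B * \<bar>t\<bar>)"
    by (simp add: mult_left_mono)
  also have "\<dots> = \<delta> * \<bar>t\<bar> ^ 3"
    by (simp add: B_def exp_minus_inverse field_simps power2_eq_square power3_eq_cube)
  finally show ?thesis .
qed

section \<open>Stein's method under local dependence\<close>

lemma cmod_local_expansion_le:
  fixes y u d r t :: real
  shows "cmod (y * iexp (t * (u + d + r)) - y * iexp (t * (d + r)) - \<i> * t * (y * u) * iexp (t * r))
    \<le> \<bar>y\<bar> * (t * u)\<^sup>2 / 2 + \<bar>t * (y * u)\<bar> * \<bar>t * d\<bar>"
proof -
  have "y * iexp (t * (u + d + r)) - y * iexp (t * (d + r)) - \<i> * t * (y * u) * iexp (t * r)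
      = y * iexp (t * (d + r)) * (iexp (t * u) - 1 - \<i> * (t * u))
        + \<i> * (t * (y * u)) * iexp (t * r) * (iexp (t * d) - 1)"
    by (simp add: exp_add[symmetric] algebra_simps)
  also have "cmod \<dots> \<le> \<bar>y\<bar> * cmod (iexp (t * u) - 1 - \<i> * (t * u))
      + \<bar>t * (y * u)\<bar> * cmod (iexp (t * d) - 1)"
    by (rule order_trans[OF norm_triangle_ineq]) (simp add: norm_mult del: of_real_mult)
  also have "\<dots> \<le> \<bar>y\<bar> * (t * u)\<^sup>2 / 2 + \<bar>t * (y * u)\<bar> * \<bar>t * d\<bar>"
    using mult_left_mono[OF cmod_iexp_sub_linear_le[of "t * u"], of "\<bar>y\<bar>"]
      mult_left_mono[OF cmod_iexp_sub_one_le[of "t * d"], of "\<bar>t * (y * u)\<bar>"]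
    by (simp del: of_real_mult)
  finally show ?thesis .
qed

lemma borel_measurable_sum_components:
  "C \<subseteq> A \<Longrightarrow> (\<lambda>x. \<Sum>j\<in>C. x j :: real) \<in> borel_measurable (PiM A (\<lambda>_. borel))"
  by (rule borel_measurable_sum[where f="\<lambda>j x. x j"]) (auto intro: measurable_component_singleton)

lemma borel_measurable_iexp_sum_components:
  "(\<lambda>x. iexp (t * (\<Sum>j\<in>C. x j))) \<in> borel_measurable (PiM C (\<lambda>_. borel))"
proof -
  have [measurable]: "(\<lambda>x. \<Sum>j\<in>C. x j :: real) \<in> borel_measurable (PiM C (\<lambda>_. borel))"
    by (rule borel_measurable_sum_components) simp
  show ?thesis
    by measurable
qed

lemma sum_restrict: "(\<Sum>j\<in>C. (\<lambda>k\<in>C. f k) j) = (\<Sum>j\<in>C. f j)"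
  by (rule sum.cong) auto

lemma (in prob_space) indep_var_restrict_integral_mult:
  fixes Y :: "'v \<Rightarrow> 'a \<Rightarrow> real"
    and F G :: "('v \<Rightarrow> real) \<Rightarrow> 'b::{real_normed_field, banach, second_countable_topology}"
  assumes "indep_var (PiM A (\<lambda>_. borel)) (\<lambda>\<omega>. \<lambda>j\<in>A. Y j \<omega>) (PiM B (\<lambda>_. borel)) (\<lambda>\<omega>. \<lambda>j\<in>B. Y j \<omega>)"
    and "F \<in> borel_measurable (PiM A (\<lambda>_. borel))" "G \<in> borel_measurable (PiM B (\<lambda>_. borel))"
    and "integrable M (\<lambda>\<omega>. F (\<lambda>j\<in>A. Y j \<omega>))" "integrable M (\<lambda>\<omega>. G (\<lambda>j\<in>B. Y j \<omega>))"
  shows "(\<integral>\<omega>. F (\<lambda>j\<in>A. Y j \<omega>) * G (\<lambda>j\<in>B. Y j \<omega>) \<partial>M)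
       = (\<integral>\<omega>. F (\<lambda>j\<in>A. Y j \<omega>) \<partial>M) * (\<integral>\<omega>. G (\<lambda>j\<in>B. Y j \<omega>) \<partial>M)"
  using indep_var_lebesgue_integral[OF indep_var_compose[OF assms(1-3), unfolded comp_def] assms(4,5)] .

text \<open>The local dependence conditions (LD1) and (LD2) of Chen and Shao: \<open>Y\<^sub>i\<close> is independent
  of the variables outside its neighbourhood \<open>A i\<close>, and the variables in \<open>A i\<close> are independent
  of those outside the larger neighbourhood \<open>B i\<close>.\<close>
locale local_dependence = prob_space M for M :: "'a measure" +
  fixes Y :: "'v \<Rightarrow> 'a \<Rightarrow> real" and S :: "'v set" and A B :: "'v \<Rightarrow> 'v set" and b D D' :: real
  assumes finite_S: "finite S"
    and measurable_Y [measurable]: "\<And>j. j \<in> S \<Longrightarrow> Y j \<in> borel_measurable M"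
    and bounded_Y: "\<And>j \<omega>. j \<in> S \<Longrightarrow> \<bar>Y j \<omega>\<bar> \<le> b"
    and mean_zero_Y: "\<And>j. j \<in> S \<Longrightarrow> expectation (Y j) = 0"
    and self_in_A: "\<And>i. i \<in> S \<Longrightarrow> i \<in> A i"
    and A_subset_B: "\<And>i. i \<in> S \<Longrightarrow> A i \<subseteq> B i"
    and B_subset_S: "\<And>i. i \<in> S \<Longrightarrow> B i \<subseteq> S"
    and card_A_le: "\<And>i. i \<in> S \<Longrightarrow> real (card (A i)) \<le> D"
    and card_B_le: "\<And>i. i \<in> S \<Longrightarrow> real (card (B i)) \<le> D'"
    and indep_outside_A: "\<And>i. i \<in> S \<Longrightarrow> indep_var
          (PiM {i} (\<lambda>_. borel)) (\<lambda>\<omega>. \<lambda>j\<in>{i}. Y j \<omega>) (PiM (S - A i) (\<lambda>_. borel)) (\<lambda>\<omega>. \<lambda>j\<in>S - A i. Y j \<omega>)"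
    and indep_outside_B: "\<And>i. i \<in> S \<Longrightarrow> indep_var
          (PiM (A i) (\<lambda>_. borel)) (\<lambda>\<omega>. \<lambda>j\<in>A i. Y j \<omega>) (PiM (S - B i) (\<lambda>_. borel)) (\<lambda>\<omega>. \<lambda>j\<in>S - B i. Y j \<omega>)"
begin

lemma borel_measurable_sum_Y [measurable]:
  "C \<subseteq> S \<Longrightarrow> (\<lambda>\<omega>. \<Sum>j\<in>C. Y j \<omega>) \<in> borel_measurable M"
  by (rule borel_measurable_sum) (auto intro: measurable_Y)

lemma bound_nonneg: "i \<in> S \<Longrightarrow> 0 \<le> b"
  using bounded_Y[of i undefined] by simp

lemma integrable_Y: "j \<in> S \<Longrightarrow> integrable M (Y j)"
  using bounded_Y by (intro integrable_of_norm_le_const[where C=b]) auto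

lemma integrable_sum_Y: "C \<subseteq> S \<Longrightarrow> integrable M (\<lambda>\<omega>. \<Sum>j\<in>C. Y j \<omega>)"
  using integrable_Y by auto

lemma abs_sum_Y_le: "C \<subseteq> S \<Longrightarrow> \<bar>\<Sum>j\<in>C. Y j \<omega>\<bar> \<le> real (card C) * b"
  using order_trans[OF sum_abs sum_bounded_above[of C "\<lambda>j. \<bar>Y j \<omega>\<bar>" b]] bounded_Y by auto

lemma integral_Y_mult_outside_A:
  fixes G :: "('v \<Rightarrow> real) \<Rightarrow> 'b::{real_normed_field, banach, second_countable_topology}"
  assumes i: "i \<in> S" and G: "G \<in> borel_measurable (PiM (S - A i) (\<lambda>_. borel))"
    and integrable_G: "integrable M (\<lambda>\<omega>. G (\<lambda>j\<in>S - A i. Y j \<omega>))"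
  shows "(\<integral>\<omega>. of_real (Y i \<omega>) * G (\<lambda>j\<in>S - A i. Y j \<omega>) \<partial>M) = 0"
proof -
  note Y_integrable = integrable_Y[OF i]
  have restrict_i: "(\<lambda>j\<in>{i}. Y j \<omega>) i = Y i \<omega>" for \<omega>
    by simp
  have "(\<integral>\<omega>. of_real (Y i \<omega>) * G (\<lambda>j\<in>S - A i. Y j \<omega>) \<partial>M)
      = (\<integral>\<omega>. of_real (Y i \<omega>) \<partial>M) * (\<integral>\<omega>. G (\<lambda>j\<in>S - A i. Y j \<omega>) \<partial>M)"
    by (rule indep_var_restrict_integral_mult[OF indep_outside_A[OF i] _ G _ integrable_G,
          where F="\<lambda>x. of_real (x i)", unfolded restrict_i])
      (auto intro: integrable_bounded_linear[OF bounded_linear_of_real Y_integrable])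
  also have "(\<integral>\<omega>. of_real (Y i \<omega>) \<partial>M) = (of_real (expectation (Y i)) :: 'b)"
    by (rule integral_bounded_linear[OF bounded_linear_of_real Y_integrable])
  also have "\<dots> * (\<integral>\<omega>. G (\<lambda>j\<in>S - A i. Y j \<omega>) \<partial>M) = 0"
    using mean_zero_Y[OF i] by simp
  finally show ?thesis .
qed

lemma integral_neighbourhood_mult_outside_B:
  fixes G :: "('v \<Rightarrow> real) \<Rightarrow> 'b::{real_normed_field, banach, second_countable_topology}"
  assumes i: "i \<in> S" and G: "G \<in> borel_measurable (PiM (S - B i) (\<lambda>_. borel))"
    and integrable_G: "integrable M (\<lambda>\<omega>. G (\<lambda>j\<in>S - B i. Y j \<omega>))"
  shows "(\<integral>\<omega>. of_real (Y i \<omega> * (\<Sum>j\<in>A i. Y j \<omega>)) * G (\<lambda>j\<in>S - B i. Y j \<omega>) \<partial>M)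
       = of_real (\<integral>\<omega>. Y i \<omega> * (\<Sum>j\<in>A i. Y j \<omega>) \<partial>M) * (\<integral>\<omega>. G (\<lambda>j\<in>S - B i. Y j \<omega>) \<partial>M)"
proof -
  have A: "i \<in> A i" "A i \<subseteq> S"
    using i self_in_A A_subset_B B_subset_S by blast+
  have restrict_i: "(\<lambda>j\<in>A i. Y j \<omega>) i = Y i \<omega>" for \<omega>
    using A(1) by simp
  have integrable_prod: "integrable M (\<lambda>\<omega>. Y i \<omega> * (\<Sum>j\<in>A i. Y j \<omega>))"
    using A i bounded_Y abs_sum_Y_le bound_nonneg
    by (intro integrable_of_norm_le_const[where C="b * (real (card (A i)) * b)"])
      (auto simp: abs_mult intro!: mult_mono)
  have "(\<lambda>x. x i * (\<Sum>j\<in>A i. x j) :: real) \<in> borel_measurable (PiM (A i) (\<lambda>_. borel))"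
    by (intro borel_measurable_times measurable_component_singleton[OF A(1)]
        borel_measurable_sum_components) simp
  then have F_measurable: "(\<lambda>x. of_real (x i * (\<Sum>j\<in>A i. x j)) :: 'b) \<in> borel_measurable (PiM (A i) (\<lambda>_. borel))"
    by measurable
  have "(\<integral>\<omega>. of_real (Y i \<omega> * (\<Sum>j\<in>A i. Y j \<omega>)) * G (\<lambda>j\<in>S - B i. Y j \<omega>) \<partial>M)
      = (\<integral>\<omega>. of_real (Y i \<omega> * (\<Sum>j\<in>A i. Y j \<omega>)) \<partial>M) * (\<integral>\<omega>. G (\<lambda>j\<in>S - B i. Y j \<omega>) \<partial>M)"
    by (rule indep_var_restrict_integral_mult[OF indep_outside_B[OF i] _ G _ integrable_G,
          where F="\<lambda>x. of_real (x i * (\<Sum>j\<in>A i. x j))", unfolded restrict_i sum_restrict])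
      (fact F_measurable, rule integrable_bounded_linear[OF bounded_linear_of_real integrable_prod])
  also have "(\<integral>\<omega>. of_real (Y i \<omega> * (\<Sum>j\<in>A i. Y j \<omega>)) \<partial>M)
      = (of_real (\<integral>\<omega>. Y i \<omega> * (\<Sum>j\<in>A i. Y j \<omega>) \<partial>M) :: 'b)"
    by (rule integral_bounded_linear[OF bounded_linear_of_real integrable_prod])
  finally show ?thesis .
qed

lemma sum_neighbourhood_covariance_eq:
  "(\<Sum>i\<in>S. \<integral>\<omega>. Y i \<omega> * (\<Sum>j\<in>A i. Y j \<omega>) \<partial>M) = expectation (\<lambda>\<omega>. (\<Sum>j\<in>S. Y j \<omega>)\<^sup>2)"
proof -
  have integrable: "integrable M (\<lambda>\<omega>. Y i \<omega> * (\<Sum>j\<in>C. Y j \<omega>))" if "i \<in> S" "C \<subseteq> S" for i C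
    using that bounded_Y abs_sum_Y_le bound_nonneg
    by (intro integrable_of_norm_le_const[where C="b * (real (card C) * b)"])
      (auto simp: abs_mult intro!: mult_mono)
  have "expectation (\<lambda>\<omega>. (\<Sum>j\<in>S. Y j \<omega>)\<^sup>2) = (\<Sum>i\<in>S. expectation (\<lambda>\<omega>. Y i \<omega> * (\<Sum>j\<in>S. Y j \<omega>)))"
    by (simp add: power2_eq_square sum_distrib_right integrable Bochner_Integration.integral_sum)
  also have "\<dots> = (\<Sum>i\<in>S. \<integral>\<omega>. Y i \<omega> * (\<Sum>j\<in>A i. Y j \<omega>) \<partial>M)"
  proof (rule sum.cong[OF refl])
    fix i assume i: "i \<in> S"
    have A: "A i \<subseteq> S"
      using i A_subset_B B_subset_S by blast
    have outside: "expectation (\<lambda>\<omega>. Y i \<omega> * (\<Sum>j\<in>S - A i. Y j \<omega>)) = 0"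
      using integral_Y_mult_outside_A[OF i, where G="\<lambda>x. \<Sum>j\<in>S - A i. x j", unfolded sum_restrict]
        integrable[OF i, of "S - A i"] integrable_sum_Y[of "S - A i"]
      by (simp add: borel_measurable_sum_components)
    have "(\<Sum>j\<in>S. Y j \<omega>) = (\<Sum>j\<in>A i. Y j \<omega>) + (\<Sum>j\<in>S - A i. Y j \<omega>)" for \<omega>
      using sum.subset_diff[OF A finite_S, of "\<lambda>j. Y j \<omega>"] by linarith
    then show "expectation (\<lambda>\<omega>. Y i \<omega> * (\<Sum>j\<in>S. Y j \<omega>)) = (\<integral>\<omega>. Y i \<omega> * (\<Sum>j\<in>A i. Y j \<omega>) \<partial>M)"
      using outside integrable[OF i A] integrable[OF i, of "S - A i"]
      by (simp add: distrib_left)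
  qed
  finally show ?thesis ..
qed

lemma constants_nonneg:
  assumes "i \<in> S"
  shows "0 \<le> b" "0 \<le> D" "0 \<le> D'"
  using bound_nonneg[OF assms] order_trans[OF of_nat_0_le_iff card_A_le[OF assms]]
    order_trans[OF of_nat_0_le_iff card_B_le[OF assms]] by auto

lemma abs_sum_Y_le_const:
  "C \<subseteq> S \<Longrightarrow> real (card C) \<le> K \<Longrightarrow> 0 \<le> b \<Longrightarrow> \<bar>\<Sum>j\<in>C. Y j \<omega>\<bar> \<le> K * b"
  using abs_sum_Y_le[of C \<omega>] mult_right_mono[of "real (card C)" K b] by linarith

lemma sum_Y_split:
  assumes "i \<in> S"
  shows "(\<Sum>j\<in>S. Y j \<omega>) = (\<Sum>j\<in>A i. Y j \<omega>) + (\<Sum>j\<in>B i - A i. Y j \<omega>) + (\<Sum>j\<in>S - B i. Y j \<omega>)"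
    and "(\<Sum>j\<in>S - A i. Y j \<omega>) = (\<Sum>j\<in>B i - A i. Y j \<omega>) + (\<Sum>j\<in>S - B i. Y j \<omega>)"
proof -
  have sub: "A i \<subseteq> B i" "B i \<subseteq> S" "B i - A i \<subseteq> S - A i"
    using assms A_subset_B B_subset_S by blast+
  have finite: "finite (B i)" "finite (S - A i)"
    using sub finite_S by (auto intro: finite_subset)
  have "(S - A i) - (B i - A i) = S - B i"
    using sub by blast
  then show "(\<Sum>j\<in>S - A i. Y j \<omega>) = (\<Sum>j\<in>B i - A i. Y j \<omega>) + (\<Sum>j\<in>S - B i. Y j \<omega>)"
    using sum.subset_diff[OF sub(3) finite(2), of "\<lambda>j. Y j \<omega>"] by simp
  show "(\<Sum>j\<in>S. Y j \<omega>) = (\<Sum>j\<in>A i. Y j \<omega>) + (\<Sum>j\<in>B i - A i. Y j \<omega>) + (\<Sum>j\<in>S - B i. Y j \<omega>)"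
    using sum.subset_diff[OF sub(2) finite_S, of "\<lambda>j. Y j \<omega>"]
      sum.subset_diff[OF sub(1) finite(1), of "\<lambda>j. Y j \<omega>"] by linarith
qed

lemma integrable_iexp_sum_Y:
  assumes "C \<subseteq> S"
  shows "integrable M (\<lambda>\<omega>. iexp (t * (\<Sum>j\<in>C. Y j \<omega>)))"
proof (rule integrable_of_norm_le_const[where C=1])
  have [measurable]: "(\<lambda>\<omega>. \<Sum>j\<in>C. Y j \<omega>) \<in> borel_measurable M"
    using assms by (rule borel_measurable_sum_Y)
  show "(\<lambda>\<omega>. iexp (t * (\<Sum>j\<in>C. Y j \<omega>))) \<in> borel_measurable M"
    by measurable
qed simp

lemma integral_Y_mult_iexp_outside_A:
  "i \<in> S \<Longrightarrow> (CLINT \<omega>|M. Y i \<omega> * iexp (t * (\<Sum>j\<in>S - A i. Y j \<omega>))) = 0"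
  using integral_Y_mult_outside_A[OF _ borel_measurable_iexp_sum_components, unfolded sum_restrict]
    integrable_iexp_sum_Y[of "S - A i"] by simp

lemma integral_neighbourhood_mult_iexp_outside_B:
  "i \<in> S \<Longrightarrow> (CLINT \<omega>|M. of_real (Y i \<omega> * (\<Sum>j\<in>A i. Y j \<omega>)) * iexp (t * (\<Sum>j\<in>S - B i. Y j \<omega>)))
    = of_real (\<integral>\<omega>. Y i \<omega> * (\<Sum>j\<in>A i. Y j \<omega>) \<partial>M) * (CLINT \<omega>|M. iexp (t * (\<Sum>j\<in>S - B i. Y j \<omega>)))"
  using integral_neighbourhood_mult_outside_B[OF _ borel_measurable_iexp_sum_components, unfolded sum_restrict]
    integrable_iexp_sum_Y[of "S - B i"] by simp

text \<open>The two subtracted terms are those whose expectations are controlled by (LD1) and (LD2);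
  what is left is quadratic in \<open>t\<close>.\<close>
lemma cmod_stein_remainder_le:
  assumes i: "i \<in> S"
  shows "cmod (Y i \<omega> * iexp (t * (\<Sum>j\<in>S. Y j \<omega>)) - Y i \<omega> * iexp (t * (\<Sum>j\<in>S - A i. Y j \<omega>))
      - \<i> * t * (Y i \<omega> * (\<Sum>j\<in>A i. Y j \<omega>)) * iexp (t * (\<Sum>j\<in>S - B i. Y j \<omega>)))
    \<le> b ^ 3 * (D\<^sup>2 / 2 + D * D') * t\<^sup>2"
proof -
  define U where "U = (\<Sum>j\<in>A i. Y j \<omega>)"
  define V where "V = (\<Sum>j\<in>B i - A i. Y j \<omega>)"
  note nonneg = constants_nonneg[OF i]
  have sub: "A i \<subseteq> S" "B i - A i \<subseteq> S"
    using i A_subset_B B_subset_S by blast+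
  have "real (card (B i - A i)) \<le> D'"
    using card_mono[of "B i" "B i - A i"] card_B_le[OF i] finite_subset[OF B_subset_S[OF i] finite_S] by auto
  then have bound_V: "\<bar>V\<bar> \<le> D' * b"
    unfolding V_def using sub nonneg by (intro abs_sum_Y_le_const)
  have bound_U: "\<bar>U\<bar> \<le> D * b"
    unfolding U_def using sub card_A_le[OF i] nonneg by (intro abs_sum_Y_le_const)
  have bound_yU: "\<bar>t * (Y i \<omega> * U)\<bar> \<le> \<bar>t\<bar> * (b * (D * b))"
    unfolding abs_mult using bounded_Y[OF i] bound_U nonneg by (intro mult_left_mono mult_mono) auto
  have "(t * U)\<^sup>2 \<le> t\<^sup>2 * (D * b)\<^sup>2"
    using power_mono[OF bound_U abs_ge_zero, of 2] by (simp add: power_mult_distrib mult_left_mono)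
  then have "\<bar>Y i \<omega>\<bar> * (t * U)\<^sup>2 / 2 + \<bar>t * (Y i \<omega> * U)\<bar> * \<bar>t * V\<bar>
      \<le> b * (t\<^sup>2 * (D * b)\<^sup>2) / 2 + \<bar>t\<bar> * (b * (D * b)) * (\<bar>t\<bar> * (D' * b))"
    using bounded_Y[OF i] bound_yU bound_V nonneg
    by (intro add_mono mult_mono divide_right_mono) (auto simp: abs_mult intro: mult_left_mono)
  also have "\<dots> = b ^ 3 * (D\<^sup>2 / 2 + D * D') * t\<^sup>2"
    by (simp add: power2_eq_square power3_eq_cube algebra_simps)
  finally show ?thesis
    using cmod_local_expansion_le[of "Y i \<omega>" t U V "\<Sum>j\<in>S - B i. Y j \<omega>"]
    unfolding sum_Y_split[OF i] U_def V_def by (simp add: add.assoc)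
qed

lemma abs_Y_mult_neighbourhood_le:
  assumes i: "i \<in> S"
  shows "\<bar>Y i \<omega> * (\<Sum>j\<in>A i. Y j \<omega>)\<bar> \<le> b * (D * b)"
proof -
  have "A i \<subseteq> S"
    using i A_subset_B B_subset_S by blast
  then show ?thesis
    unfolding abs_mult using bounded_Y[OF i] abs_sum_Y_le_const[OF _ card_A_le[OF i]] constants_nonneg[OF i]
    by (intro mult_mono) auto
qed

lemma cmod_char_integral_outside_B_diff_le:
  assumes i: "i \<in> S"
  shows "cmod ((CLINT \<omega>|M. iexp (t * (\<Sum>j\<in>S - B i. Y j \<omega>))) - (CLINT \<omega>|M. iexp (t * (\<Sum>j\<in>S. Y j \<omega>))))
    \<le> \<bar>t\<bar> * (D' * b)"
proof (rule cmod_char_integral_diff_le)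
  have B: "B i \<subseteq> S"
    using i B_subset_S by blast
  show "(\<lambda>\<omega>. \<Sum>j\<in>S - B i. Y j \<omega>) \<in> borel_measurable M" "(\<lambda>\<omega>. \<Sum>j\<in>S. Y j \<omega>) \<in> borel_measurable M"
    using B by (auto intro: borel_measurable_sum_Y)
  show "\<bar>(\<Sum>j\<in>S - B i. Y j \<omega>) - (\<Sum>j\<in>S. Y j \<omega>)\<bar> \<le> D' * b" for \<omega>
    using sum.subset_diff[OF B finite_S, of "\<lambda>j. Y j \<omega>"]
      abs_sum_Y_le_const[OF B card_B_le[OF i] constants_nonneg(1)[OF i], of \<omega>] by simp
qed

lemma stein_term_le:
  assumes i: "i \<in> S"
  shows "cmod ((CLINT \<omega>|M. Y i \<omega> * iexp (t * (\<Sum>j\<in>S. Y j \<omega>)))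
      - \<i> * t * (\<integral>\<omega>. Y i \<omega> * (\<Sum>j\<in>A i. Y j \<omega>) \<partial>M) * (CLINT \<omega>|M. iexp (t * (\<Sum>j\<in>S. Y j \<omega>))))
    \<le> b ^ 3 * (D\<^sup>2 / 2 + 2 * D * D') * t\<^sup>2"
proof -
  define U where "U \<omega> = (\<Sum>j\<in>A i. Y j \<omega>)" for \<omega>
  define R where "R \<omega> = (\<Sum>j\<in>S - B i. Y j \<omega>)" for \<omega>
  define W where "W \<omega> = (\<Sum>j\<in>S. Y j \<omega>)" for \<omega>
  define c where "c = (\<integral>\<omega>. Y i \<omega> * U \<omega> \<partial>M)"
  define \<phi> where "\<phi> = (CLINT \<omega>|M. iexp (t * W \<omega>))"
  define \<phi>\<^sub>R where "\<phi>\<^sub>R = (CLINT \<omega>|M. iexp (t * R \<omega>))"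
  define rem where "rem \<omega> = Y i \<omega> * iexp (t * W \<omega>) - Y i \<omega> * iexp (t * (\<Sum>j\<in>S - A i. Y j \<omega>))
      - \<i> * t * (Y i \<omega> * U \<omega>) * iexp (t * R \<omega>)" for \<omega>
  have [measurable]: "Y i \<in> borel_measurable M" "U \<in> borel_measurable M" "R \<in> borel_measurable M"
    "W \<in> borel_measurable M" "(\<lambda>\<omega>. \<Sum>j\<in>S - A i. Y j \<omega>) \<in> borel_measurable M"
    unfolding U_def R_def W_def using i A_subset_B[OF i] B_subset_S[OF i]
    by (auto intro: borel_measurable_sum_Y)
  note bound_yU = abs_Y_mult_neighbourhood_le[OF i, folded U_def]
  have "integrable M (\<lambda>\<omega>. Y i \<omega> * iexp (t * W \<omega>))"
    "integrable M (\<lambda>\<omega>. Y i \<omega> * iexp (t * (\<Sum>j\<in>S - A i. Y j \<omega>)))"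
    "integrable M (\<lambda>\<omega>. of_real (Y i \<omega> * U \<omega>) * iexp (t * R \<omega>))"
    by (intro integrable_of_norm_le_const[where C=b] integrable_of_norm_le_const[where C="b * (D * b)"];
        simp add: norm_mult bounded_Y[OF i] bound_yU del: of_real_mult)+
  then have "(CLINT \<omega>|M. Y i \<omega> * iexp (t * W \<omega>)) - \<i> * t * c * \<phi>
      = (CLINT \<omega>|M. rem \<omega>) + \<i> * t * c * (\<phi>\<^sub>R - \<phi>)"
    using integral_Y_mult_iexp_outside_A[OF i] integral_neighbourhood_mult_iexp_outside_B[OF i]
    unfolding rem_def U_def R_def c_def \<phi>\<^sub>R_def by (simp add: integral_diff algebra_simps)
  also have "cmod \<dots> \<le> b ^ 3 * (D\<^sup>2 / 2 + D * D') * t\<^sup>2 + \<bar>t\<bar> * (b * (D * b)) * (\<bar>t\<bar> * (D' * b))"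
  proof (rule order_trans[OF norm_triangle_ineq add_mono])
    have "rem \<in> borel_measurable M"
      unfolding rem_def by measurable
    moreover have "cmod (rem \<omega>) \<le> b ^ 3 * (D\<^sup>2 / 2 + D * D') * t\<^sup>2" for \<omega>
      using cmod_stein_remainder_le[OF i, of \<omega> t] unfolding rem_def U_def R_def W_def .
    ultimately show "cmod (CLINT \<omega>|M. rem \<omega>) \<le> b ^ 3 * (D\<^sup>2 / 2 + D * D') * t\<^sup>2"
      by (rule norm_integral_le_const)
    have "\<bar>c\<bar> \<le> b * (D * b)"
      unfolding c_def using norm_integral_le_const[of "\<lambda>\<omega>. Y i \<omega> * U \<omega>"] bound_yU by simp
    with cmod_char_integral_outside_B_diff_le[OF i, of t]
    show "cmod (\<i> * t * c * (\<phi>\<^sub>R - \<phi>)) \<le> \<bar>t\<bar> * (b * (D * b)) * (\<bar>t\<bar> * (D' * b))"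
      unfolding \<phi>\<^sub>R_def \<phi>_def R_def W_def by (simp add: norm_mult mult_mono)
  qed
  also have "\<dots> = b ^ 3 * (D\<^sup>2 / 2 + 2 * D * D') * t\<^sup>2"
    by (simp add: power2_eq_square power3_eq_cube algebra_simps)
  finally show ?thesis
    unfolding c_def \<phi>_def U_def W_def .
qed

lemma char_sum_le:
  assumes unit_variance: "expectation (\<lambda>\<omega>. (\<Sum>j\<in>S. Y j \<omega>)\<^sup>2) = 1"
  shows "cmod (char (distr M borel (\<lambda>\<omega>. \<Sum>j\<in>S. Y j \<omega>)) t - exp (- t\<^sup>2 / 2))
    \<le> real (card S) * b ^ 3 * (D\<^sup>2 / 2 + 2 * D * D') * \<bar>t\<bar> ^ 3"
proof -
  define W where "W \<omega> = (\<Sum>j\<in>S. Y j \<omega>)" for \<omega>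
  define \<phi> where "\<phi> s = (CLINT \<omega>|M. iexp (s * W \<omega>))" for s
  define \<phi>' where "\<phi>' s = (CLINT \<omega>|M. \<i> * W \<omega> * iexp (s * W \<omega>))" for s
  define c where "c i = (\<integral>\<omega>. Y i \<omega> * (\<Sum>j\<in>A i. Y j \<omega>) \<partial>M)" for i
  define K where "K = b ^ 3 * (D\<^sup>2 / 2 + 2 * D * D')"
  have [measurable]: "W \<in> borel_measurable M"
    unfolding W_def by (rule borel_measurable_sum_Y) simp
  have deriv: "(\<phi> has_vector_derivative \<phi>' s) (at s)" for s
    unfolding \<phi>_def \<phi>'_def
    by (rule has_vector_derivative_char_integral[where B="real (card S) * b"])
      (simp_all add: W_def abs_sum_Y_le)
  have defect: "cmod (\<phi>' s + s * \<phi> s) \<le> real (card S) * K * s\<^sup>2" for s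
  proof -
    \<comment> \<open>The covariances \<open>c i\<close> add up to \<open>Var W = 1\<close>, so the Stein terms add up to \<open>\<phi>' + s \<phi>\<close>.\<close>
    have integrable: "integrable M (\<lambda>\<omega>. \<i> * (Y i \<omega> * iexp (s * W \<omega>)))" if "i \<in> S" for i
      using that by (intro integrable_of_norm_le_const[where C=b]) (simp_all add: norm_mult bounded_Y)
    have "\<phi>' s = (CLINT \<omega>|M. \<Sum>i\<in>S. \<i> * (Y i \<omega> * iexp (s * W \<omega>)))"
      unfolding \<phi>'_def by (simp add: W_def sum_distrib_left sum_distrib_right algebra_simps)
    also have "\<dots> = (\<Sum>i\<in>S. CLINT \<omega>|M. \<i> * (Y i \<omega> * iexp (s * W \<omega>)))"
      by (rule Bochner_Integration.integral_sum) (rule integrable)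
    also have "\<dots> = \<i> * (\<Sum>i\<in>S. CLINT \<omega>|M. Y i \<omega> * iexp (s * W \<omega>))"
      by (simp add: sum_distrib_left)
    moreover have "(\<Sum>i\<in>S. s * c i * \<phi> s) = s * \<phi> s"
    proof -
      have "(\<Sum>i\<in>S. complex_of_real s * c i * \<phi> s) = s * of_real (\<Sum>i\<in>S. c i) * \<phi> s"
        by (simp add: sum_distrib_left sum_distrib_right)
      then show ?thesis
        unfolding c_def sum_neighbourhood_covariance_eq unit_variance by simp
    qed
    ultimately have "\<phi>' s + s * \<phi> s
        = \<i> * (\<Sum>i\<in>S. (CLINT \<omega>|M. Y i \<omega> * iexp (s * W \<omega>)) - \<i> * s * c i * \<phi> s)"
      by (simp add: sum_subtractf sum_negf sum_distrib_left algebra_simps)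
    also have "cmod \<dots> \<le> (\<Sum>i\<in>S. cmod ((CLINT \<omega>|M. Y i \<omega> * iexp (s * W \<omega>)) - \<i> * s * c i * \<phi> s))"
      unfolding norm_mult by (simp add: norm_sum)
    also have "\<dots> \<le> (\<Sum>i\<in>S. K * s\<^sup>2)"
      unfolding c_def \<phi>_def W_def K_def by (intro sum_mono stein_term_le)
    finally show ?thesis
      by simp
  qed
  have "char (distr M borel W) t = \<phi> t"
    unfolding char_def \<phi>_def by (simp add: integral_distr)
  moreover have "\<phi> 0 = 1"
    by (simp add: \<phi>_def prob_space)
  ultimately show ?thesis
    using gaussian_ode_comparison[OF deriv _ defect] unfolding W_def K_def by (simp add: mult.assoc)
qed

end

section \<open>Dependency graphs\<close>

lemma dependency_graph_measurable:
  "dependency_graph M V E X \<Longrightarrow> j \<in> V \<Longrightarrow> X j \<in> borel_measurable M"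
  unfolding dependency_graph_def by simp

lemma dependency_graph_indep_var:
  assumes "dependency_graph M V E X" "V1 \<subseteq> V" "V2 \<subseteq> V" "V1 \<inter> V2 = {}"
    and "\<And>i j. i \<in> V1 \<Longrightarrow> j \<in> V2 \<Longrightarrow> \<not> E i j"
  shows "prob_space.indep_var M
    (PiM V1 (\<lambda>_. borel)) (\<lambda>\<omega>. \<lambda>i\<in>V1. X i \<omega>) (PiM V2 (\<lambda>_. borel)) (\<lambda>\<omega>. \<lambda>j\<in>V2. X j \<omega>)"
  using assms unfolding dependency_graph_def by simp

lemma (in prob_space) dependency_graph_compose:
  assumes dep: "dependency_graph M V E X" and g: "\<And>j. g j \<in> borel_measurable borel"
  shows "dependency_graph M V E (\<lambda>j \<omega>. g j (X j \<omega>))"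
  unfolding dependency_graph_def
proof (intro conjI ballI allI impI)
  show "simple_graph V E"
    using dep unfolding dependency_graph_def by simp
  show "(\<lambda>\<omega>. g j (X j \<omega>)) \<in> borel_measurable M" if "j \<in> V" for j
    using measurable_compose[OF dependency_graph_measurable[OF dep that] g] .
  have restrict_measurable: "(\<lambda>x. \<lambda>j\<in>C. g j (x j)) \<in> PiM C (\<lambda>_. borel) \<rightarrow>\<^sub>M PiM C (\<lambda>_. borel)" for C
  proof -
    note g [measurable]
    show ?thesis
      by measurable
  qed
  have restrict_compose: "(\<lambda>x. \<lambda>j\<in>C. g j (x j)) \<circ> (\<lambda>\<omega>. \<lambda>j\<in>C. X j \<omega>) = (\<lambda>\<omega>. \<lambda>j\<in>C. g j (X j \<omega>))" for C
    unfolding comp_def by (intro ext restrict_ext) simp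
  fix V1 V2 assume V: "V1 \<subseteq> V" "V2 \<subseteq> V" "V1 \<inter> V2 = {}" and no_edge: "\<forall>i\<in>V1. \<forall>j\<in>V2. \<not> E i j"
  have "indep_var
      (PiM V1 (\<lambda>_. borel)) (\<lambda>\<omega>. \<lambda>i\<in>V1. X i \<omega>) (PiM V2 (\<lambda>_. borel)) (\<lambda>\<omega>. \<lambda>j\<in>V2. X j \<omega>)"
    by (rule dependency_graph_indep_var[OF dep V]) (use no_edge in blast)
  from indep_var_compose[OF this restrict_measurable restrict_measurable]
  show "indep_var (PiM V1 (\<lambda>_. borel)) (\<lambda>\<omega>. \<lambda>i\<in>V1. g i (X i \<omega>))
      (PiM V2 (\<lambda>_. borel)) (\<lambda>\<omega>. \<lambda>j\<in>V2. g j (X j \<omega>))"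
    unfolding restrict_compose .
qed

definition closed_nbhd :: "('v \<Rightarrow> 'v \<Rightarrow> bool) \<Rightarrow> 'v set \<Rightarrow> 'v \<Rightarrow> 'v set" where
  "closed_nbhd E S i = insert i {j \<in> S. E i j}"

lemma self_in_closed_nbhd: "i \<in> closed_nbhd E S i"
  unfolding closed_nbhd_def by blast

lemma closed_nbhd_subset: "i \<in> S \<Longrightarrow> closed_nbhd E S i \<subseteq> S"
  unfolding closed_nbhd_def by blast

lemma not_edge_outside_closed_nbhd: "j \<in> S - closed_nbhd E S i \<Longrightarrow> \<not> E i j"
  unfolding closed_nbhd_def by blast

lemma not_edge_outside_second_nbhd:
  assumes "k \<in> closed_nbhd E S i" "j \<in> S - (\<Union>l\<in>closed_nbhd E S i. closed_nbhd E S l)"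
  shows "\<not> E k j"
proof
  assume "E k j"
  then have "j \<in> closed_nbhd E S k"
    using assms(2) unfolding closed_nbhd_def by blast
  then show False
    using assms by blast
qed

lemma card_closed_nbhd_le:
  assumes "finite S" "real (card {j \<in> S. E i j}) \<le> D"
  shows "real (card (closed_nbhd E S i)) \<le> D + 1"
  using card_insert_le_m1[of "card {j \<in> S. E i j} + 1" "{j \<in> S. E i j}" i] assms
  unfolding closed_nbhd_def by (auto simp: card_insert_if)

lemma card_second_nbhd_le:
  assumes S: "finite S" "i \<in> S" and degree: "\<And>k. k \<in> S \<Longrightarrow> real (card {j \<in> S. E k j}) \<le> D"
    and "0 \<le> D"
  shows "real (card (\<Union>k\<in>closed_nbhd E S i. closed_nbhd E S k)) \<le> (D + 1)\<^sup>2"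
proof -
  let ?N = "closed_nbhd E S"
  have card_N: "real (card (?N k)) \<le> D + 1" if "k \<in> S" for k
    using card_closed_nbhd_le[where E=E, OF S(1) degree[OF that]] .
  have "real (card (\<Union>k\<in>?N i. ?N k)) \<le> (\<Sum>k\<in>?N i. real (card (?N k)))"
    using card_UN_le[of "?N i" ?N] finite_subset[OF closed_nbhd_subset S(1)] S(2)
    by (simp flip: of_nat_sum)
  also have "\<dots> \<le> real (card (?N i)) * (D + 1)"
    using sum_bounded_above[of "?N i" "\<lambda>k. real (card (?N k))" "D + 1"]
      card_N closed_nbhd_subset[OF S(2)] by blast
  also have "\<dots> \<le> (D + 1) * (D + 1)"
    using card_N[OF S(2)] \<open>0 \<le> D\<close> by (intro mult_right_mono) auto
  finally show ?thesis
    by (simp add: power2_eq_square)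
qed

lemma (in prob_space) dependency_graph_local_dependence:
  assumes dep: "dependency_graph M V E Y" and S: "S \<subseteq> V" "finite S"
    and bounded: "\<And>j \<omega>. j \<in> S \<Longrightarrow> \<bar>Y j \<omega>\<bar> \<le> b"
    and mean_zero: "\<And>j. j \<in> S \<Longrightarrow> expectation (Y j) = 0"
    and degree: "\<And>i. i \<in> S \<Longrightarrow> real (card {j \<in> S. E i j}) \<le> D" and "0 \<le> D"
  shows "local_dependence M Y S (closed_nbhd E S) (\<lambda>i. \<Union>k\<in>closed_nbhd E S i. closed_nbhd E S k)
    b (D + 1) ((D + 1)\<^sup>2)"
proof -
  let ?N = "closed_nbhd E S" and ?B = "\<lambda>i. \<Union>k\<in>closed_nbhd E S i. closed_nbhd E S k"
  have Y_measurable: "\<And>j. j \<in> S \<Longrightarrow> Y j \<in> borel_measurable M"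
    using dependency_graph_measurable[OF dep] S(1) by blast
  have self: "i \<in> ?N i" and N_subset_B: "?N i \<subseteq> ?B i" if "i \<in> S" for i
    using self_in_closed_nbhd[of i E S] by blast+
  have B_subset: "?B i \<subseteq> S" if "i \<in> S" for i
    using closed_nbhd_subset[OF that] by (intro UN_least closed_nbhd_subset) blast
  have indep_N: "indep_var (PiM {i} (\<lambda>_. borel)) (\<lambda>\<omega>. \<lambda>j\<in>{i}. Y j \<omega>)
      (PiM (S - ?N i) (\<lambda>_. borel)) (\<lambda>\<omega>. \<lambda>j\<in>S - ?N i. Y j \<omega>)" if "i \<in> S" for i
  proof (rule dependency_graph_indep_var[OF dep])
    show "{i} \<subseteq> V" "S - ?N i \<subseteq> V" "{i} \<inter> (S - ?N i) = {}"
      using that S self_in_closed_nbhd[of i] by auto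
    show "\<not> E k j" if "k \<in> {i}" "j \<in> S - ?N i" for k j
      using that not_edge_outside_closed_nbhd[where E=E and S=S and i=i and j=j] by simp
  qed
  have indep_B: "indep_var (PiM (?N i) (\<lambda>_. borel)) (\<lambda>\<omega>. \<lambda>j\<in>?N i. Y j \<omega>)
      (PiM (S - ?B i) (\<lambda>_. borel)) (\<lambda>\<omega>. \<lambda>j\<in>S - ?B i. Y j \<omega>)" if "i \<in> S" for i
  proof (rule dependency_graph_indep_var[OF dep])
    show "?N i \<subseteq> V" "S - ?B i \<subseteq> V" "?N i \<inter> (S - ?B i) = {}"
      using closed_nbhd_subset[OF that] S N_subset_B[OF that] by auto
    show "\<not> E k j" if "k \<in> ?N i" "j \<in> S - ?B i" for k j
      using that by (rule not_edge_outside_second_nbhd)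
  qed
  have card_N: "real (card (?N i)) \<le> D + 1" if "i \<in> S" for i
    using card_closed_nbhd_le[where E=E, OF S(2) degree[OF that]] .
  have card_B: "\<And>i. i \<in> S \<Longrightarrow> real (card (?B i)) \<le> (D + 1)\<^sup>2"
    using card_second_nbhd_le[OF S(2) _ degree \<open>0 \<le> D\<close>] .
  have "local_dependence_axioms M Y S (closed_nbhd E S) ?B b (D + 1) ((D + 1)\<^sup>2)"
    by (rule local_dependence_axioms.intro)
      (fact S(2) Y_measurable bounded mean_zero self N_subset_B B_subset card_N card_B
        indep_N indep_B)+
  then show ?thesis
    unfolding local_dependence_def by (intro conjI prob_space_axioms)
qed

section \<open>Standardized sums\<close>

lemma (in prob_space) AE_abs_diff_le_of_prob_eq_0:
  fixes X :: "'a \<Rightarrow> real"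
  assumes [measurable]: "X \<in> borel_measurable M"
    and "prob {\<omega> \<in> space M. \<bar>X \<omega> - \<mu>\<bar> > c} = 0"
  shows "AE \<omega> in M. \<bar>X \<omega> - \<mu>\<bar> \<le> c"
proof -
  have "{\<omega> \<in> space M. \<bar>X \<omega> - \<mu>\<bar> > c} \<in> sets M"
    by measurable
  with assms(2) have "{\<omega> \<in> space M. \<bar>X \<omega> - \<mu>\<bar> > c} \<in> null_sets M"
    by (simp add: null_setsI emeasure_eq_measure)
  from AE_not_in[OF this] AE_space show ?thesis
    by eventually_elim auto
qed

lemma (in prob_space) integrable_of_AE_abs_diff_le:
  fixes X :: "'a \<Rightarrow> real"
  shows "X \<in> borel_measurable M \<Longrightarrow> AE \<omega> in M. \<bar>X \<omega> - \<mu>\<bar> \<le> c \<Longrightarrow> integrable M X"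
  by (rule integrable_const_bound[where B="\<bar>\<mu>\<bar> + c"]) (auto elim: eventually_mono)

lemma (in prob_space) abs_expectation_diff_le_of_AE:
  fixes X :: "'a \<Rightarrow> real"
  assumes "X \<in> borel_measurable M" and bound: "AE \<omega> in M. \<bar>X \<omega> - \<mu>\<bar> \<le> c"
  shows "\<bar>expectation X - \<mu>\<bar> \<le> c"
proof -
  have integrable: "integrable M X"
    using assms by (rule integrable_of_AE_abs_diff_le)
  have "expectation (\<lambda>\<omega>. X \<omega> - \<mu>) \<le> expectation (\<lambda>\<omega>. c)"
    using bound integrable by (intro integral_mono_AE) auto
  moreover have "expectation (\<lambda>\<omega>. - c) \<le> expectation (\<lambda>\<omega>. X \<omega> - \<mu>)"
    using bound integrable by (intro integral_mono_AE) auto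
  ultimately show ?thesis
    using integrable by (simp add: prob_space)
qed

lemma (in prob_space) variance_sum_div_unit:
  fixes X :: "'v \<Rightarrow> 'a \<Rightarrow> real"
  assumes "finite S" "\<And>j. j \<in> S \<Longrightarrow> integrable M (X j)"
    and \<sigma>: "\<sigma> > 0" "\<sigma>\<^sup>2 = variance (\<lambda>\<omega>. \<Sum>j\<in>S. X j \<omega>)"
  shows "expectation (\<lambda>\<omega>. ((\<Sum>j\<in>S. X j \<omega> - expectation (X j)) / \<sigma>)\<^sup>2) = 1"
proof -
  have "expectation (\<lambda>\<omega>. \<Sum>j\<in>S. X j \<omega>) = (\<Sum>j\<in>S. expectation (X j))"
    using assms by (intro Bochner_Integration.integral_sum)
  then have "expectation (\<lambda>\<omega>. ((\<Sum>j\<in>S. X j \<omega> - expectation (X j)) / \<sigma>)\<^sup>2)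
      = variance (\<lambda>\<omega>. \<Sum>j\<in>S. X j \<omega>) / \<sigma>\<^sup>2"
    by (simp add: sum_subtractf power_divide)
  moreover have "variance (\<lambda>\<omega>. \<Sum>j\<in>S. X j \<omega>) > 0"
    using zero_less_power[OF \<sigma>(1), of 2] \<sigma>(2) by simp
  ultimately show ?thesis
    using \<sigma>(2) by simp
qed

lemma (in prob_space) clipped_standardization:
  fixes X :: "'a \<Rightarrow> real" and \<mu> c \<sigma> :: real
  defines "Z \<equiv> \<lambda>\<omega>. (max (\<mu> - c) (min (\<mu> + c) (X \<omega>)) - expectation X) / \<sigma>"
  assumes X: "X \<in> borel_measurable M" and bound: "AE \<omega> in M. \<bar>X \<omega> - \<mu>\<bar> \<le> c" and "\<sigma> > 0"
  shows "AE \<omega> in M. Z \<omega> = (X \<omega> - expectation X) / \<sigma>" and "\<bar>Z \<omega>\<bar> \<le> 2 * c / \<sigma>"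
    and "expectation Z = 0"
proof -
  show AE_eq: "AE \<omega> in M. Z \<omega> = (X \<omega> - expectation X) / \<sigma>"
    using bound by eventually_elim (auto simp: Z_def max_def min_def)
  have "\<bar>expectation X - \<mu>\<bar> \<le> c"
    using X bound by (rule abs_expectation_diff_le_of_AE)
  then have "\<bar>max (\<mu> - c) (min (\<mu> + c) (X \<omega>)) - expectation X\<bar> \<le> 2 * c"
    by (auto simp: max_def min_def)
  then show "\<bar>Z \<omega>\<bar> \<le> 2 * c / \<sigma>"
    unfolding Z_def abs_divide using \<open>\<sigma> > 0\<close> by (simp add: divide_right_mono)
  have "expectation Z = expectation (\<lambda>\<omega>. (X \<omega> - expectation X) / \<sigma>)"
    using AE_eq X by (intro integral_cong_AE) (simp_all add: Z_def)
  also have "\<dots> = 0"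
    using integrable_of_AE_abs_diff_le[OF X bound] by (simp add: prob_space)
  finally show "expectation Z = 0" .
qed

lemma (in prob_space) char_standardized_sum_le:
  fixes X :: "'v \<Rightarrow> 'a \<Rightarrow> real"
  assumes dep: "dependency_graph M V E X" and S: "S \<subseteq> V" "finite S"
    and "0 < c1" and bounded: "\<And>i. i \<in> S \<Longrightarrow> prob {\<omega> \<in> space M. \<bar>X i \<omega> - \<mu>\<bar> > c1} = 0"
    and degree: "\<And>i. i \<in> S \<Longrightarrow> real (card {j \<in> S. E i j}) \<le> c2" and "0 \<le> c2"
    and \<sigma>: "\<sigma> > 0" "\<sigma>\<^sup>2 = variance (\<lambda>\<omega>. \<Sum>j\<in>S. X j \<omega>)"
  shows "cmod (char (distr M borel (\<lambda>\<omega>. (\<Sum>j\<in>S. X j \<omega> - expectation (X j)) / \<sigma>)) t - exp (- t\<^sup>2 / 2))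
    \<le> real (card S) * (2 * c1 / \<sigma>) ^ 3 * ((c2 + 1)\<^sup>2 / 2 + 2 * (c2 + 1) * (c2 + 1)\<^sup>2) * \<bar>t\<bar> ^ 3"
proof -
  define g where "g j r = (max (\<mu> - c1) (min (\<mu> + c1) r) - expectation (X j)) / \<sigma>" for j r
  define Y where "Y j \<omega> = g j (X j \<omega>)" for j \<omega>
  have X_measurable [measurable]: "X j \<in> borel_measurable M" if "j \<in> S" for j
    using dependency_graph_measurable[OF dep] that S(1) by blast
  have AE_bound: "AE \<omega> in M. \<bar>X j \<omega> - \<mu>\<bar> \<le> c1" if "j \<in> S" for j
    using X_measurable[OF that] bounded[OF that] by (rule AE_abs_diff_le_of_prob_eq_0)
  note clipped = clipped_standardization[OF X_measurable AE_bound \<sigma>(1), folded g_def Y_def]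
  have g_measurable: "g j \<in> borel_measurable borel" for j
    unfolding g_def by measurable
  have [measurable]: "(\<lambda>\<omega>. \<Sum>j\<in>S. Y j \<omega>) \<in> borel_measurable M"
    using measurable_compose[OF X_measurable g_measurable] by (auto simp: Y_def)
  have "AE \<omega> in M. \<forall>j\<in>S. Y j \<omega> = (X j \<omega> - expectation (X j)) / \<sigma>"
    using S(2) clipped(1) by (rule AE_finite_allI)
  then have sum_AE: "AE \<omega> in M. (\<Sum>j\<in>S. Y j \<omega>) = (\<Sum>j\<in>S. X j \<omega> - expectation (X j)) / \<sigma>"
    by eventually_elim (simp add: sum_divide_distrib)
  have "expectation (\<lambda>\<omega>. (\<Sum>j\<in>S. Y j \<omega>)\<^sup>2)
      = expectation (\<lambda>\<omega>. ((\<Sum>j\<in>S. X j \<omega> - expectation (X j)) / \<sigma>)\<^sup>2)"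
    using sum_AE by (intro integral_cong_AE) (auto elim: eventually_mono)
  also have "\<dots> = 1"
    using S(2) integrable_of_AE_abs_diff_le[OF X_measurable AE_bound] \<sigma> by (rule variance_sum_div_unit)
  finally have unit_variance: "expectation (\<lambda>\<omega>. (\<Sum>j\<in>S. Y j \<omega>)\<^sup>2) = 1" .
  interpret local_dependence M Y S "closed_nbhd E S" "\<lambda>i. \<Union>k\<in>closed_nbhd E S i. closed_nbhd E S k"
    "2 * c1 / \<sigma>" "c2 + 1" "(c2 + 1)\<^sup>2"
    using dependency_graph_compose[OF dep g_measurable] S clipped(2,3) degree \<open>0 \<le> c2\<close>
    unfolding Y_def[abs_def] by (rule dependency_graph_local_dependence)
  have "distr M borel (\<lambda>\<omega>. \<Sum>j\<in>S. Y j \<omega>)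
      = distr M borel (\<lambda>\<omega>. (\<Sum>j\<in>S. X j \<omega> - expectation (X j)) / \<sigma>)"
    using sum_AE X_measurable by (intro distr_cong_AE) auto
  with char_sum_le[OF unit_variance] show ?thesis
    by simp
qed

lemma (in prob_space) variance_scale: "variance (\<lambda>\<omega>. c * X \<omega>) = c\<^sup>2 * variance X"
  for X :: "'a \<Rightarrow> real"
  by (simp add: power_mult_distrib flip: right_diff_distrib)

lemma (in prob_space) char_standardized_mean_le:
  fixes X :: "'v \<Rightarrow> 'a \<Rightarrow> real" and S :: "'v set"
  defines "Xbar \<equiv> \<lambda>\<omega>. 1 / real (card S) * (\<Sum>j\<in>S. X j \<omega>)"
    and "m \<equiv> 1 / real (card S) * (\<Sum>j\<in>S. expectation (X j))"
  assumes dep: "dependency_graph M V E X" and S: "S \<subseteq> V" "finite S" "S \<noteq> {}"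
    and "0 < c1" and bounded: "\<And>i. i \<in> S \<Longrightarrow> prob {\<omega> \<in> space M. \<bar>X i \<omega> - \<mu>\<bar> > c1} = 0"
    and degree: "\<And>i. i \<in> S \<Longrightarrow> real (card {j \<in> S. E i j}) \<le> c2" and "0 \<le> c2"
    and variance_pos: "variance Xbar > 0"
  shows "cmod (char (distr M borel (\<lambda>\<omega>. (Xbar \<omega> - m) / sqrt (variance Xbar))) t - exp (- t\<^sup>2 / 2))
    \<le> real (card S) * (2 * c1 / (real (card S) * sqrt (variance Xbar))) ^ 3
      * ((c2 + 1)\<^sup>2 / 2 + 2 * (c2 + 1) * (c2 + 1)\<^sup>2) * \<bar>t\<bar> ^ 3"
proof -
  define \<sigma> where "\<sigma> = real (card S) * sqrt (variance Xbar)"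
  have "card S > 0"
    using S by (simp add: card_gt_0_iff)
  then have "\<sigma> > 0"
    using variance_pos by (simp add: \<sigma>_def)
  have "(\<Sum>j\<in>S. X j \<omega>) = real (card S) * Xbar \<omega>" for \<omega>
    using \<open>card S > 0\<close> by (simp add: Xbar_def)
  then have "variance (\<lambda>\<omega>. \<Sum>j\<in>S. X j \<omega>) = variance (\<lambda>\<omega>. real (card S) * Xbar \<omega>)"
    by (simp only:)
  also have "\<dots> = \<sigma>\<^sup>2"
    unfolding variance_scale using variance_pos by (simp add: \<sigma>_def power_mult_distrib)
  finally have "\<sigma>\<^sup>2 = variance (\<lambda>\<omega>. \<Sum>j\<in>S. X j \<omega>)" ..
  moreover have "(Xbar \<omega> - m) / sqrt (variance Xbar) = (\<Sum>j\<in>S. X j \<omega> - expectation (X j)) / \<sigma>" for \<omega>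
    using \<open>card S > 0\<close> by (simp add: Xbar_def m_def \<sigma>_def sum_subtractf field_simps)
  ultimately show ?thesis
    using char_standardized_sum_le[OF dep S(1,2) \<open>0 < c1\<close> bounded degree \<open>0 \<le> c2\<close> \<open>\<sigma> > 0\<close>]
    by (simp add: \<sigma>_def)
qed

section \<open>The standard normal distribution\<close>

lemma real_distribution_std_normal: "real_distribution std_normal"
  unfolding std_normal_def by (rule real_dist_normal_dist)

lemma measure_std_normal_singleton: "measure std_normal {x} = 0"
proof -
  have "emeasure std_normal {x} = (\<integral>\<^sup>+ y. ennreal (std_normal_density y) * indicator {x} y \<partial>lborel)"
    unfolding std_normal_def by (rule emeasure_density) simp_all
  also have "\<dots> = (\<integral>\<^sup>+ y. ennreal (std_normal_density x) * indicator {x} y \<partial>lborel)"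
    by (rule nn_integral_cong) (simp split: split_indicator)
  also have "\<dots> = 0" by (simp add: nn_integral_cmult_indicator)
  finally show ?thesis by (simp add: measure_def)
qed

lemma isCont_std_normal_cdf: "isCont std_normal_cdf x"
proof -
  interpret real_distribution std_normal by (rule real_distribution_std_normal)
  show ?thesis unfolding std_normal_cdf_def[abs_def]
    using isCont_cdf measure_std_normal_singleton by simp
qed

lemma distr_std_normal_uminus: "distr std_normal borel uminus = std_normal"
proof -
  have "distr std_normal borel uminus = distr (density lborel (\<lambda>x. std_normal_density (- x))) borel uminus"
    unfolding std_normal_def std_normal_density_def by simp
  also have "\<dots> = density (distr lborel borel uminus) std_normal_density"
    by (subst density_distr) auto
  also have "\<dots> = std_normal" unfolding lborel_distr_uminus std_normal_def ..
  finally show ?thesis .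
qed

lemma std_normal_cdf_minus: "std_normal_cdf (- x) = 1 - std_normal_cdf x"
proof -
  interpret real_distribution std_normal by (rule real_distribution_std_normal)
  have "std_normal_cdf (- x) = measure std_normal {..-x}"
    unfolding std_normal_cdf_def cdf_def ..
  also have "\<dots> = measure (distr std_normal borel uminus) {x..}"
    by (subst measure_distr) (auto intro!: arg_cong[where f="measure std_normal"])
  also have "\<dots> = measure std_normal {x..}" by (simp add: distr_std_normal_uminus)
  also have "\<dots> = 1 - measure std_normal {..<x}"
  proof -
    have U: "{x..} \<union> {..<x} = (UNIV::real set)" by auto
    have "measure std_normal {x..} + measure std_normal {..<x} = 1"
      using finite_measure_Union[of "{x..}" "{..<x}"] prob_space
      using U by (simp add: disjoint_iff)
    then show ?thesis by simp
  qed
  also have "measure std_normal {..<x} = measure std_normal {..x}"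
  proof -
    have "measure std_normal {..x} = measure std_normal {..<x} + measure std_normal {x}"
      using finite_measure_Union[of "{..<x}" "{x}"] by (simp add: ivl_disj_un(2)[symmetric] Un_commute)
    then show ?thesis using measure_std_normal_singleton by simp
  qed
  finally show ?thesis unfolding std_normal_cdf_def cdf_def by simp
qed

lemma std_normal_cdf_strict_mono:
  assumes "x < y" shows "std_normal_cdf x < std_normal_cdf y"
proof -
  interpret real_distribution std_normal by (rule real_distribution_std_normal)
  define m where "m = max \<bar>x\<bar> \<bar>y\<bar>"
  define c where "c = std_normal_density m"
  have c: "c > 0" unfolding c_def std_normal_density_def by simp
  have le: "c \<le> std_normal_density z" if "z \<in> {x<..y}" for z
  proof -
    have "\<bar>z\<bar> \<le> \<bar>m\<bar>" using that unfolding m_def by auto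
    then have "z\<^sup>2 \<le> m\<^sup>2" by (simp add: abs_le_square_iff)
    then show ?thesis unfolding c_def std_normal_density_def
      by (intro mult_left_mono) auto
  qed
  have "emeasure std_normal {x<..y} = (\<integral>\<^sup>+ z. ennreal (std_normal_density z) * indicator {x<..y} z \<partial>lborel)"
    unfolding std_normal_def by (subst emeasure_density) auto
  also have "\<dots> \<ge> (\<integral>\<^sup>+ z. ennreal c * indicator {x<..y} z \<partial>lborel)"
    by (intro nn_integral_mono) (auto simp: indicator_def le)
  moreover have "(\<integral>\<^sup>+ z. ennreal c * indicator {x<..y} z \<partial>lborel) = ennreal (c * (y - x))"
    using assms c by (simp add: nn_integral_cmult_indicator ennreal_mult)
  ultimately have "emeasure std_normal {x<..y} \<ge> ennreal (c * (y - x))" by simp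
  moreover have "c * (y - x) > 0" using c assms by simp
  ultimately have "measure std_normal {x<..y} > 0"
    using emeasure_eq_measure[of "{x<..y}"] by (metis ennreal_le_iff less_le_trans measure_nonneg)
  then show ?thesis using cdf_diff_eq[OF assms] unfolding std_normal_cdf_def by simp
qed

lemma std_normal_cdf_quantile:
  assumes "0 < p" "p < 1"
  shows "std_normal_cdf (std_normal_quantile p) = p"
proof -
  interpret real_distribution std_normal by (rule real_distribution_std_normal)
  have "eventually (\<lambda>x. cdf std_normal x < p) at_bot"
    using order_tendstoD(2)[OF cdf_lim_at_bot assms(1)] .
  then obtain a where a: "cdf std_normal a < p" by (auto simp: eventually_at_bot_linorder)
  have "eventually (\<lambda>x. cdf std_normal x > p) at_top"
    using order_tendstoD(1)[OF cdf_lim_at_top_prob assms(2)] .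
  then obtain b0 where b0: "\<And>x. x \<ge> b0 \<Longrightarrow> cdf std_normal x > p" by (auto simp: eventually_at_top_linorder)
  define b where "b = max a b0"
  have b: "cdf std_normal b > p" "a \<le> b" using b0 unfolding b_def by auto
  obtain z where z: "std_normal_cdf z = p"
    using IVT[of std_normal_cdf a p b] a b isCont_std_normal_cdf unfolding std_normal_cdf_def[symmetric]
    by (auto simp: std_normal_cdf_def)
  have "\<exists>!z. std_normal_cdf z = p"
  proof (rule ex1I[of _ z])
    fix w assume "std_normal_cdf w = p"
    then show "w = z" using z std_normal_cdf_strict_mono by (metis linorder_neqE_linordered_idom less_irrefl)
  qed (rule z)
  then show ?thesis unfolding std_normal_quantile_def by (rule theI')
qed

lemma std_normal_quantile_pos:
  assumes "1 / 2 < p" "p < 1"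
  shows "0 < std_normal_quantile p"
proof (rule ccontr)
  assume "\<not> 0 < std_normal_quantile p"
  then have "std_normal_cdf (std_normal_quantile p) \<le> std_normal_cdf 0"
    using std_normal_cdf_strict_mono[of "std_normal_quantile p" 0] by (cases "std_normal_quantile p = 0") auto
  moreover have "std_normal_cdf 0 = 1 / 2"
    using std_normal_cdf_minus[of 0] by simp
  ultimately show False
    using std_normal_cdf_quantile[of p] assms by simp
qed

section \<open>Asymptotic normality and coverage\<close>

lemma cdf_tendsto_std_normal_cdf_of_char_bound:
  fixes M :: "nat \<Rightarrow> 'a measure" and W :: "nat \<Rightarrow> 'a \<Rightarrow> real"
  assumes prob: "\<And>n. prob_space (M n)" and measurable: "\<And>n. W n \<in> borel_measurable (M n)"
    and bound: "eventually (\<lambda>n. \<forall>t. cmod (char (distr (M n) borel (W n)) t - exp (- t\<^sup>2 / 2))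
      \<le> \<delta> n * \<bar>t\<bar> ^ 3) sequentially"
    and \<delta>: "\<delta> \<longlonglongrightarrow> 0"
  shows "(\<lambda>n. prob_space.prob (M n) {\<omega> \<in> space (M n). W n \<omega> \<le> x}) \<longlonglongrightarrow> std_normal_cdf x"
proof -
  have distributions: "real_distribution (distr (M n) borel (W n))" for n
    using prob_space.real_distribution_distr[OF prob measurable] .
  have "(\<lambda>n. char (distr (M n) borel (W n)) t - exp (- t\<^sup>2 / 2)) \<longlonglongrightarrow> 0" for t
  proof (rule Lim_null_comparison)
    show "eventually (\<lambda>n. norm (char (distr (M n) borel (W n)) t - exp (- t\<^sup>2 / 2)) \<le> \<delta> n * \<bar>t\<bar> ^ 3)
        sequentially"
      using bound by eventually_elim simp
    show "(\<lambda>n. \<delta> n * \<bar>t\<bar> ^ 3) \<longlonglongrightarrow> 0"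
      using tendsto_mult_left_zero[OF \<delta>] .
  qed
  then have "(\<lambda>n. char (distr (M n) borel (W n)) t) \<longlonglongrightarrow> char std_normal t" for t
    unfolding std_normal_def char_std_normal_distribution by (simp add: LIM_zero_iff)
  then have "weak_conv_m (\<lambda>n. distr (M n) borel (W n)) std_normal"
    by (intro levy_continuity distributions real_distribution_std_normal)
  then have "(\<lambda>n. cdf (distr (M n) borel (W n)) x) \<longlonglongrightarrow> cdf std_normal x"
    using isCont_std_normal_cdf unfolding weak_conv_m_def weak_conv_def std_normal_cdf_def[abs_def] by blast
  moreover have "cdf (distr (M n) borel (W n)) x = prob_space.prob (M n) {\<omega> \<in> space (M n). W n \<omega> \<le> x}" for n
    unfolding cdf_def using measurable[of n]
    by (subst measure_distr) (auto intro!: arg_cong[where f="measure (M n)"])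
  ultimately show ?thesis
    unfolding std_normal_cdf_def by simp
qed

lemma tendsto_lyapunov_ratio_0:
  fixes s :: "nat \<Rightarrow> real"
  assumes u: "(\<lambda>n. real n * (s n)\<^sup>2) \<longlonglongrightarrow> c" and "c > 0" and nonneg: "\<And>n. 0 \<le> s n"
  shows "(\<lambda>n. real n * (a / (real n * s n)) ^ 3) \<longlonglongrightarrow> 0"
proof -
  define u where "u n = real n * (s n)\<^sup>2" for n
  note u = u[folded u_def]
  have "filterlim (\<lambda>n. u n * real n) at_top sequentially"
    using filterlim_tendsto_pos_mult_at_top[OF u \<open>c > 0\<close> filterlim_real_sequentially] .
  then have "filterlim (\<lambda>n. sqrt (u n * real n)) at_top sequentially"
    by (rule filterlim_compose[OF sqrt_at_top])
  then have "filterlim (\<lambda>n. u n * sqrt (u n * real n)) at_top sequentially"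
    by (rule filterlim_tendsto_pos_mult_at_top[OF u \<open>c > 0\<close>])
  then have "(\<lambda>n. a ^ 3 / (u n * sqrt (u n * real n))) \<longlonglongrightarrow> 0"
    by (intro tendsto_divide_0[OF tendsto_const] filterlim_at_top_imp_at_infinity)
  moreover have "eventually (\<lambda>n. u n > 0) sequentially"
    using order_tendstoD(1)[OF u \<open>c > 0\<close>] .
  then have "eventually (\<lambda>n. a ^ 3 / (u n * sqrt (u n * real n)) = real n * (a / (real n * s n)) ^ 3)
      sequentially"
  proof eventually_elim
    case (elim n)
    then have "real n * s n > 0"
      using nonneg[of n] by (auto simp: u_def zero_less_mult_iff)
    moreover have "u n * real n = (real n * s n)\<^sup>2"
      by (simp add: u_def power2_eq_square)
    ultimately have "sqrt (u n * real n) = real n * s n"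
      by simp
    with \<open>real n * s n > 0\<close> show ?case
      by (simp add: u_def power2_eq_square power3_eq_cube field_simps)
  qed
  ultimately show ?thesis
    by (rule Lim_transform_eventually)
qed

lemma (in prob_space) prob_coverage_ge:
  fixes X V :: "'a \<Rightarrow> real"
  assumes [measurable]: "X \<in> borel_measurable M" "V \<in> borel_measurable M"
    and "s > 0" "0 \<le> z" "0 \<le> r"
  shows "prob {\<omega> \<in> space M. (X \<omega> - \<mu>) / s \<le> z * r} - prob {\<omega> \<in> space M. (X \<omega> - \<mu>) / s \<le> - (z * r)}
      - prob {\<omega> \<in> space M. V \<omega> < (r * s)\<^sup>2}
    \<le> prob {\<omega> \<in> space M. \<bar>X \<omega> - \<mu>\<bar> \<le> z * sqrt (V \<omega>)}"
proof -
  let ?A = "{\<omega> \<in> space M. (X \<omega> - \<mu>) / s \<le> z * r}" and ?B = "{\<omega> \<in> space M. (X \<omega> - \<mu>) / s \<le> - (z * r)}"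
    and ?U = "{\<omega> \<in> space M. V \<omega> < (r * s)\<^sup>2}" and ?T = "{\<omega> \<in> space M. \<bar>X \<omega> - \<mu>\<bar> \<le> z * sqrt (V \<omega>)}"
  have "?A \<subseteq> ?B \<union> ?U \<union> ?T"
  proof
    fix \<omega> assume "\<omega> \<in> ?A"
    show "\<omega> \<in> ?B \<union> ?U \<union> ?T"
    proof (rule ccontr)
      assume "\<omega> \<notin> ?B \<union> ?U \<union> ?T"
      with \<open>\<omega> \<in> ?A\<close> have "\<bar>X \<omega> - \<mu>\<bar> / s \<le> z * r" and "r * s \<le> sqrt (V \<omega>)"
        using \<open>s > 0\<close> \<open>0 \<le> r\<close> by (auto intro: real_le_rsqrt)
      then have "\<bar>X \<omega> - \<mu>\<bar> \<le> z * (r * s)"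
        using \<open>s > 0\<close> by (simp add: field_simps)
      also have "\<dots> \<le> z * sqrt (V \<omega>)"
        using \<open>r * s \<le> sqrt (V \<omega>)\<close> \<open>0 \<le> z\<close> by (rule mult_left_mono)
      finally show False
        using \<open>\<omega> \<notin> ?B \<union> ?U \<union> ?T\<close> \<open>\<omega> \<in> ?A\<close> by auto
    qed
  qed
  then have "prob ?A \<le> prob (?B \<union> ?U \<union> ?T)"
    by (intro finite_measure_mono) measurable
  also have "\<dots> \<le> prob ?B + prob ?U + prob ?T"
    by (intro order_trans[OF measure_Un_le] add_mono measure_Un_le order_refl) measurable
  finally show ?thesis
    by simp
qed

lemma liminf_prob_coverage_ge:
  fixes M :: "nat \<Rightarrow> 'a measure" and X V :: "nat \<Rightarrow> 'a \<Rightarrow> real" and \<mu> s :: "nat \<Rightarrow> real"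
  assumes prob: "\<And>n. prob_space (M n)"
    and measurable: "\<And>n. X n \<in> borel_measurable (M n)" "\<And>n. V n \<in> borel_measurable (M n)"
    and s: "eventually (\<lambda>n. s n > 0) sequentially"
    and cdf: "\<And>x. (\<lambda>n. prob_space.prob (M n) {\<omega> \<in> space (M n). (X n \<omega> - \<mu> n) / s n \<le> x}) \<longlonglongrightarrow> F x"
    and underestimate: "(\<lambda>n. prob_space.prob (M n) {\<omega> \<in> space (M n). V n \<omega> < (r * s n)\<^sup>2}) \<longlonglongrightarrow> 0"
    and "0 \<le> z" "0 \<le> r"
  shows "ereal (F (z * r) - F (- (z * r)))
    \<le> liminf (\<lambda>n. ereal (prob_space.prob (M n) {\<omega> \<in> space (M n). \<bar>X n \<omega> - \<mu> n\<bar> \<le> z * sqrt (V n \<omega>)}))"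
proof -
  define a where "a n = prob_space.prob (M n) {\<omega> \<in> space (M n). (X n \<omega> - \<mu> n) / s n \<le> z * r}
    - prob_space.prob (M n) {\<omega> \<in> space (M n). (X n \<omega> - \<mu> n) / s n \<le> - (z * r)}
    - prob_space.prob (M n) {\<omega> \<in> space (M n). V n \<omega> < (r * s n)\<^sup>2}" for n
  have "a \<longlonglongrightarrow> F (z * r) - F (- (z * r)) - 0"
    unfolding a_def by (intro tendsto_diff cdf underestimate)
  then have "ereal (F (z * r) - F (- (z * r))) = liminf (\<lambda>n. ereal (a n))"
    by (intro lim_imp_Liminf[symmetric]) auto
  also have "\<dots> \<le> liminf (\<lambda>n. ereal (prob_space.prob (M n) {\<omega> \<in> space (M n). \<bar>X n \<omega> - \<mu> n\<bar> \<le> z * sqrt (V n \<omega>)}))"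
    using s by (intro Liminf_mono) (auto elim!: eventually_mono simp: a_def
        intro: prob_space.prob_coverage_ge[OF prob measurable] \<open>0 \<le> z\<close> \<open>0 \<le> r\<close>)
  finally show ?thesis .
qed

lemma prob_variance_underestimate_tendsto_0:
  fixes M :: "nat \<Rightarrow> 'a measure" and V :: "nat \<Rightarrow> 'a \<Rightarrow> real" and v :: "nat \<Rightarrow> real"
  assumes prob: "\<And>n. prob_space (M n)" and measurable: "\<And>n. V n \<in> borel_measurable (M n)"
    and v: "(\<lambda>n. real n * v n) \<longlonglongrightarrow> c" "c > 0"
    and consistent: "\<And>\<epsilon>. \<epsilon> > 0 \<Longrightarrow>
      (\<lambda>n. prob_space.prob (M n) {\<omega> \<in> space (M n). real n * v n - real n * V n \<omega> > \<epsilon>}) \<longlonglongrightarrow> 0"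
    and r: "0 \<le> r" "r < 1"
  shows "(\<lambda>n. prob_space.prob (M n) {\<omega> \<in> space (M n). V n \<omega> < (r * sqrt (v n))\<^sup>2}) \<longlonglongrightarrow> 0"
proof -
  define \<epsilon> where "\<epsilon> = (1 - r\<^sup>2) * (c / 2)"
  have "r\<^sup>2 < 1"
    using r by (simp add: power_less_one_iff)
  then have "\<epsilon> > 0"
    using v(2) by (simp add: \<epsilon>_def)
  have "eventually (\<lambda>n. real n * v n > c / 2) sequentially"
    using order_tendstoD(1)[OF v(1), of "c / 2"] v(2) by simp
  then have "eventually (\<lambda>n. prob_space.prob (M n) {\<omega> \<in> space (M n). V n \<omega> < (r * sqrt (v n))\<^sup>2}
      \<le> prob_space.prob (M n) {\<omega> \<in> space (M n). real n * v n - real n * V n \<omega> > \<epsilon>}) sequentially"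
  proof eventually_elim
    case (elim n)
    interpret prob_space "M n"
      by (rule prob)
    have "0 < real n * v n"
      using elim v(2) by linarith
    then have "v n > 0" "n > 0"
      by (auto simp: zero_less_mult_iff)
    have "real n * v n - real n * V n \<omega> > \<epsilon>" if "V n \<omega> < (r * sqrt (v n))\<^sup>2" for \<omega>
    proof -
      have "real n * V n \<omega> < r\<^sup>2 * (real n * v n)"
        using that \<open>v n > 0\<close> \<open>n > 0\<close> by (simp add: power_mult_distrib)
      moreover have "\<epsilon> < (1 - r\<^sup>2) * (real n * v n)"
        using elim \<open>r\<^sup>2 < 1\<close> v(2) unfolding \<epsilon>_def by (intro mult_strict_left_mono) auto
      ultimately show ?thesis
        by (simp add: algebra_simps)
    qed
    then show ?case
      using measurable[of n] by (intro finite_measure_mono) auto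
  qed
  then show ?thesis
    by (intro tendsto_sandwich[OF _ _ tendsto_const consistent[OF \<open>\<epsilon> > 0\<close>]])
      (auto intro: measure_nonneg)
qed

lemma ereal_le_of_tendsto_at_left_1:
  fixes h :: "real \<Rightarrow> real"
  assumes le: "\<And>r. 0 < r \<Longrightarrow> r < 1 \<Longrightarrow> ereal (h r) \<le> L" and lim: "(h \<longlongrightarrow> c) (at_left 1)"
  shows "ereal c \<le> L"
proof (rule tendsto_le[OF trivial_limit_at_left_real[of "1::real"] tendsto_const])
  show "((\<lambda>r. ereal (h r)) \<longlongrightarrow> ereal c) (at_left 1)"
    using lim by simp
  show "eventually (\<lambda>r. ereal (h r) \<le> L) (at_left (1::real))"
    using eventually_at_left_real[OF zero_less_one] by eventually_elim (auto intro: le)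
qed

theorem dependency_graph_clt:
  fixes M :: "nat \<Rightarrow> 'a measure" and V S :: "nat \<Rightarrow> 'v set" and E :: "nat \<Rightarrow> 'v \<Rightarrow> 'v \<Rightarrow> bool"
    and X :: "nat \<Rightarrow> 'v \<Rightarrow> 'a \<Rightarrow> real" and c1 c2 c3 :: real
  defines "\<mu> \<equiv> \<lambda>n. (1 / real n) * (\<Sum>i\<in>S n. prob_space.expectation (M n) (X n i))"
    and "Xbar \<equiv> \<lambda>n \<omega>. (1 / real n) * (\<Sum>i\<in>S n. X n i \<omega>)"
  assumes prob: "\<And>n. prob_space (M n)" and dep: "\<And>n. dependency_graph (M n) (V n) (E n) (X n)"
    and S_sub: "\<And>n. S n \<subseteq> V n" and card_S: "\<And>n. card (S n) = n"
    and "0 < c1" and bounded: "\<And>n i. i \<in> S n \<Longrightarrow>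
      prob_space.prob (M n) {\<omega> \<in> space (M n). \<bar>X n i \<omega> - \<mu> n\<bar> > c1} = 0"
    and degree: "\<And>n i. i \<in> S n \<Longrightarrow> real (card {j \<in> S n. E n i j}) \<le> c2" and "0 \<le> c2"
    and var_lim: "(\<lambda>n. real n * prob_space.variance (M n) (Xbar n)) \<longlonglongrightarrow> c3" and "0 < c3"
  shows "(\<lambda>n. prob_space.prob (M n) {\<omega> \<in> space (M n).
    (Xbar n \<omega> - \<mu> n) / sqrt (prob_space.variance (M n) (Xbar n)) \<le> x}) \<longlonglongrightarrow> std_normal_cdf x"
proof -
  define s where "s n = sqrt (prob_space.variance (M n) (Xbar n))" for n
  define K where "K = (c2 + 1)\<^sup>2 / 2 + 2 * (c2 + 1) * (c2 + 1)\<^sup>2"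
  have "eventually (\<lambda>n. 0 < real n * prob_space.variance (M n) (Xbar n)) sequentially"
    using order_tendstoD(1)[OF var_lim \<open>0 < c3\<close>] .
  then have "eventually (\<lambda>n. \<forall>t. cmod (char (distr (M n) borel (\<lambda>\<omega>. (Xbar n \<omega> - \<mu> n) / s n)) t
      - exp (- t\<^sup>2 / 2)) \<le> real n * (2 * c1 / (real n * s n)) ^ 3 * K * \<bar>t\<bar> ^ 3) sequentially"
  proof eventually_elim
    case (elim n)
    then have "S n \<noteq> {}" "finite (S n)" "prob_space.variance (M n) (Xbar n) > 0"
      using card_S[of n] by (auto simp: zero_less_mult_iff card_ge_0_finite)
    with prob_space.char_standardized_mean_le[OF prob dep S_sub _ _ \<open>0 < c1\<close> bounded degree \<open>0 \<le> c2\<close>]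
    show ?case
      unfolding s_def K_def Xbar_def \<mu>_def card_S by simp
  qed
  moreover have "(\<lambda>n. real n * (2 * c1 / (real n * s n)) ^ 3 * K) \<longlonglongrightarrow> 0"
  proof (intro tendsto_mult_left_zero tendsto_lyapunov_ratio_0[OF _ \<open>0 < c3\<close>])
    show "(\<lambda>n. real n * (s n)\<^sup>2) \<longlonglongrightarrow> c3"
      using var_lim prob_space.variance_positive[OF prob] by (simp add: s_def)
  qed (simp add: s_def)
  moreover have "Xbar n \<in> borel_measurable (M n)" for n
    unfolding Xbar_def using dependency_graph_measurable[OF dep] S_sub
    by (intro borel_measurable_times borel_measurable_const borel_measurable_sum) blast
  ultimately show ?thesis
    unfolding s_def[symmetric] by (intro cdf_tendsto_std_normal_cdf_of_char_bound[OF prob]) (auto simp: mult.assoc)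
qed

lemma liminf_prob_normal_coverage_ge:
  fixes M :: "nat \<Rightarrow> 'a measure" and X V :: "nat \<Rightarrow> 'a \<Rightarrow> real" and \<mu> s :: "nat \<Rightarrow> real"
  assumes prob: "\<And>n. prob_space (M n)"
    and measurable: "\<And>n. X n \<in> borel_measurable (M n)" "\<And>n. V n \<in> borel_measurable (M n)"
    and s: "eventually (\<lambda>n. s n > 0) sequentially"
    and cdf: "\<And>x. (\<lambda>n. prob_space.prob (M n) {\<omega> \<in> space (M n). (X n \<omega> - \<mu> n) / s n \<le> x})
      \<longlonglongrightarrow> std_normal_cdf x"
    and underestimate: "\<And>r. 0 \<le> r \<Longrightarrow> r < 1 \<Longrightarrow>
      (\<lambda>n. prob_space.prob (M n) {\<omega> \<in> space (M n). V n \<omega> < (r * s n)\<^sup>2}) \<longlonglongrightarrow> 0"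
    and \<alpha>: "0 < \<alpha>" "\<alpha> < 1"
  shows "ereal (1 - \<alpha>) \<le> liminf (\<lambda>n. ereal (prob_space.prob (M n) {\<omega> \<in> space (M n).
    \<bar>X n \<omega> - \<mu> n\<bar> \<le> std_normal_quantile (1 - \<alpha> / 2) * sqrt (V n \<omega>)}))"
proof -
  define z where "z = std_normal_quantile (1 - \<alpha> / 2)"
  have "z > 0"
    unfolding z_def using \<alpha> by (intro std_normal_quantile_pos) auto
  have coverage: "ereal (std_normal_cdf (z * r) - std_normal_cdf (- (z * r)))
      \<le> liminf (\<lambda>n. ereal (prob_space.prob (M n) {\<omega> \<in> space (M n). \<bar>X n \<omega> - \<mu> n\<bar> \<le> z * sqrt (V n \<omega>)}))"
    if "0 < r" "r < 1" for r
    by (rule liminf_prob_coverage_ge[OF prob measurable s cdf underestimate]) (use that \<open>z > 0\<close> in auto)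
  have "((\<lambda>r. z * r) \<longlongrightarrow> z * 1) (at_left 1)"
    by (intro tendsto_intros)
  then have "((\<lambda>r. std_normal_cdf (z * r) - std_normal_cdf (- (z * r)))
      \<longlongrightarrow> std_normal_cdf z - std_normal_cdf (- z)) (at_left 1)"
    by (intro tendsto_diff isCont_tendsto_compose[OF isCont_std_normal_cdf] tendsto_minus) simp_all
  with coverage have "ereal (std_normal_cdf z - std_normal_cdf (- z))
      \<le> liminf (\<lambda>n. ereal (prob_space.prob (M n) {\<omega> \<in> space (M n). \<bar>X n \<omega> - \<mu> n\<bar> \<le> z * sqrt (V n \<omega>)}))"
    by (rule ereal_le_of_tendsto_at_left_1)
  moreover have "std_normal_cdf z - std_normal_cdf (- z) = 1 - \<alpha>"
    unfolding std_normal_cdf_minus z_def using \<alpha> by (simp add: std_normal_cdf_quantile)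
  ultimately show ?thesis
    unfolding z_def by simp
qed

theorem proposition3:
  fixes M :: "nat \<Rightarrow> 'a measure"
    and V S :: "nat \<Rightarrow> 'v set"
    and E :: "nat \<Rightarrow> 'v \<Rightarrow> 'v \<Rightarrow> bool"
    and X :: "nat \<Rightarrow> 'v \<Rightarrow> 'a \<Rightarrow> real"
    and Vhat :: "nat \<Rightarrow> 'a \<Rightarrow> real"
    and c1 c2 c3 \<alpha> :: real
  defines "\<mu> \<equiv> (\<lambda>n. (1 / real n) * (\<Sum>i\<in>S n. prob_space.expectation (M n) (X n i)))"
    and "Xbar \<equiv> (\<lambda>n \<omega>. (1 / real n) * (\<Sum>i\<in>S n. X n i \<omega>))"
  assumes prob: "\<And>n. prob_space (M n)"
    and finV: "\<And>n. finite (V n)"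
    and dep: "\<And>n. dependency_graph (M n) (V n) (E n) (X n)"
    and S_sub: "\<And>n. S n \<subseteq> V n"
    and card_S: "\<And>n. card (S n) = n"
    and nested_V: "\<And>n. V n \<subseteq> V (Suc n)"
    and nested_S: "\<And>n. S n \<subseteq> S (Suc n)"
    and nested_E: "\<And>n i j. i \<in> V n \<Longrightarrow> j \<in> V n \<Longrightarrow> E (Suc n) i j = E n i j"
    and c_pos: "0 < c1" "0 < c2" "0 < c3"
    and bounded: "\<And>n i. i \<in> S n \<Longrightarrow>
        prob_space.prob (M n) {\<omega> \<in> space (M n). \<bar>X n i \<omega> - \<mu> n\<bar> > c1} = 0"
    and degree: "\<And>n i. i \<in> S n \<Longrightarrow> real (card {j \<in> S n. E n i j}) \<le> c2"
    and var_lim: "(\<lambda>n. real n * prob_space.variance (M n) (Xbar n)) \<longlonglongrightarrow> c3"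
    and Vhat_meas: "\<And>n. Vhat n \<in> borel_measurable (M n)"
    and Vhat_cons: "\<And>\<epsilon>. \<epsilon> > 0 \<Longrightarrow>
        (\<lambda>n. prob_space.prob (M n) {\<omega> \<in> space (M n).
           real n * prob_space.variance (M n) (Xbar n) - real n * Vhat n \<omega> > \<epsilon>}) \<longlonglongrightarrow> 0"
    and alpha: "0 < \<alpha>" "\<alpha> < 1"
  shows "liminf (\<lambda>n. ereal (prob_space.prob (M n) {\<omega> \<in> space (M n).
            \<bar>Xbar n \<omega> - \<mu> n\<bar> \<le> std_normal_quantile (1 - \<alpha> / 2) * sqrt (Vhat n \<omega>)}))
         \<ge> ereal (1 - \<alpha>)"
proof -
  define s where "s n = sqrt (prob_space.variance (M n) (Xbar n))" for n
  have Xbar_measurable: "Xbar n \<in> borel_measurable (M n)" for n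
    unfolding Xbar_def using dependency_graph_measurable[OF dep] S_sub
    by (intro borel_measurable_times borel_measurable_const borel_measurable_sum) blast
  have "eventually (\<lambda>n. 0 < real n * prob_space.variance (M n) (Xbar n)) sequentially"
    using order_tendstoD(1)[OF var_lim c_pos(3)] .
  then have s_pos: "eventually (\<lambda>n. s n > 0) sequentially"
    by eventually_elim (auto simp: s_def zero_less_mult_iff)
  have cdf: "(\<lambda>n. prob_space.prob (M n) {\<omega> \<in> space (M n). (Xbar n \<omega> - \<mu> n) / s n \<le> x})
      \<longlonglongrightarrow> std_normal_cdf x" for x
    using dependency_graph_clt[OF prob dep S_sub card_S c_pos(1) bounded[unfolded \<mu>_def] degree
        less_imp_le[OF c_pos(2)] var_lim[unfolded Xbar_def] c_pos(3)]
    unfolding s_def \<mu>_def Xbar_def .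
  have underestimate: "(\<lambda>n. prob_space.prob (M n) {\<omega> \<in> space (M n). Vhat n \<omega> < (r * s n)\<^sup>2}) \<longlonglongrightarrow> 0"
    if "0 \<le> r" "r < 1" for r
    unfolding s_def using prob Vhat_meas var_lim c_pos(3) Vhat_cons that
    by (rule prob_variance_underestimate_tendsto_0)
  show ?thesis
    using liminf_prob_normal_coverage_ge[OF prob Xbar_measurable Vhat_meas s_pos cdf underestimate alpha] .
qed

end
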